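(* There exist absolute constants $C_S,C_K>0$ such that the following holds. Let $n_1,n_2\ge2$, $1\le s_1\le n_1$, $1\le s_2\le n_2$, $1\le R\le\min\{n_1,n_2\}$, $\Gamma\ge1$, $m\ge1$. Then $$\int_0^{\Gamma\sqrt R/\sqrt m}\sqrt{\log N(S^{R,\Gamma}_{s_1,s_2},\|\cdot\|_F,\sqrt m\,\varepsilon)}\,d\varepsilon\le\sqrt{\frac{C_S\Gamma^2R^2(s_1+s_2)\log(\max\{n_1,n_2\})}{m}},$$ $$\int_0^{\Gamma\sqrt R/\sqrt m}\sqrt{\log N(K^{R,\Gamma}_{s_1,s_2},\|\cdot\|_F,\sqrt m\,\varepsilon)}\,d\varepsilon\le\sqrt{\frac{C_K\Gamma^2R^2(s_1+s_2)\log^3(\max\{n_1,n_2\})}{m}}.$$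
   Context: $N(M,\|\cdot\|,\varepsilon)$ is the minimal number of $\|\cdot\|$-balls of radius $\varepsilon$ covering $M$. $S^{R,\Gamma}_{s_1,s_2}$ is the set of $Z=\sum_{r=1}^R\sigma_ru^r(v^r)^T\in\mathbb{R}^{n_1\times n_2}$ with $|\mathrm{supp}(u^r)|\le s_1$, $|\mathrm{supp}(v^r)|\le s_2$, $\|u^r\|_2=\|v^r\|_2=1$, $\|\sigma\|_2\le\Gamma$. With $K_{n,s}=\{z\in\mathbb{R}^n:\|z\|_2\le1,\|z\|_1\le\sqrt s\}$, $K^{R,\Gamma}_{s_1,s_2}$ is the set of $Z=\sum_{r=1}^R\sigma_ru^r(v^r)^T$ with $u^r\in K_{n_1,s_1}$, $v^r\in K_{n_2,s_2}$, $\|u^r\|_2=\|v^r\|_2=1$, $\|\sigma\|_2\le\Gamma$. *)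

theory Defs
  imports "HOL-Analysis.Analysis"
begin

text \<open>Matrices in R^{n1 x n2} are represented as functions nat => nat => real that
vanish outside the index box {..<n1} x {..<n2}; vectors in R^n as functions nat => real
vanishing outside {..<n}.\<close>

definition mat_space :: "nat \<Rightarrow> nat \<Rightarrow> (nat \<Rightarrow> nat \<Rightarrow> real) set" where
  "mat_space n1 n2 = {Z. \<forall>i j. (i \<ge> n1 \<or> j \<ge> n2) \<longrightarrow> Z i j = 0}"

definition frob_dist :: "nat \<Rightarrow> nat \<Rightarrow> (nat \<Rightarrow> nat \<Rightarrow> real) \<Rightarrow> (nat \<Rightarrow> nat \<Rightarrow> real) \<Rightarrow> real" where
  "frob_dist n1 n2 Z W = sqrt (\<Sum>i<n1. \<Sum>j<n2. (Z i j - W i j)\<^sup>2)"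

definition covering_number ::
  "nat \<Rightarrow> nat \<Rightarrow> (nat \<Rightarrow> nat \<Rightarrow> real) set \<Rightarrow> real \<Rightarrow> nat" where
  "covering_number n1 n2 M eps = Inf {card C | C. finite C \<and> C \<subseteq> mat_space n1 n2 \<and>
      (\<forall>Z\<in>M. \<exists>W\<in>C. frob_dist n1 n2 Z W \<le> eps)}"

definition vnorm2 :: "nat \<Rightarrow> (nat \<Rightarrow> real) \<Rightarrow> real" where
  "vnorm2 n u = sqrt (\<Sum>i<n. (u i)\<^sup>2)"

definition vnorm1 :: "nat \<Rightarrow> (nat \<Rightarrow> real) \<Rightarrow> real" where
  "vnorm1 n u = (\<Sum>i<n. \<bar>u i\<bar>)"

definition vspace :: "nat \<Rightarrow> (nat \<Rightarrow> real) set" where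
  "vspace n = {u. \<forall>i\<ge>n. u i = 0}"

definition supp :: "(nat \<Rightarrow> real) \<Rightarrow> nat set" where
  "supp u = {i. u i \<noteq> 0}"

definition K_set :: "nat \<Rightarrow> nat \<Rightarrow> (nat \<Rightarrow> real) set" where
  "K_set n s = {z \<in> vspace n. vnorm2 n z \<le> 1 \<and> vnorm1 n z \<le> sqrt (real s)}"

definition rank_sum :: "nat \<Rightarrow> (nat \<Rightarrow> real) \<Rightarrow> (nat \<Rightarrow> nat \<Rightarrow> real) \<Rightarrow> (nat \<Rightarrow> nat \<Rightarrow> real)
    \<Rightarrow> (nat \<Rightarrow> nat \<Rightarrow> real)" where
  "rank_sum R \<sigma> u v = (\<lambda>i j. \<Sum>r<R. \<sigma> r * u r i * v r j)"

definition S_set :: "nat \<Rightarrow> nat \<Rightarrow> nat \<Rightarrow> nat \<Rightarrow> nat \<Rightarrow> real \<Rightarrow> (nat \<Rightarrow> nat \<Rightarrow> real) set" where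
  "S_set n1 n2 s1 s2 R \<Gamma> = {rank_sum R \<sigma> u v | \<sigma> u v.
     (\<forall>r<R. u r \<in> vspace n1 \<and> v r \<in> vspace n2 \<and>
        card (supp (u r)) \<le> s1 \<and> card (supp (v r)) \<le> s2 \<and>
        vnorm2 n1 (u r) = 1 \<and> vnorm2 n2 (v r) = 1) \<and> vnorm2 R \<sigma> \<le> \<Gamma>}"

definition KR_set :: "nat \<Rightarrow> nat \<Rightarrow> nat \<Rightarrow> nat \<Rightarrow> nat \<Rightarrow> real \<Rightarrow> (nat \<Rightarrow> nat \<Rightarrow> real) set" where
  "KR_set n1 n2 s1 s2 R \<Gamma> = {rank_sum R \<sigma> u v | \<sigma> u v.
     (\<forall>r<R. u r \<in> K_set n1 s1 \<and> v r \<in> K_set n2 s2 \<and>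
        vnorm2 n1 (u r) = 1 \<and> vnorm2 n2 (v r) = 1) \<and> vnorm2 R \<sigma> \<le> \<Gamma>}"

end

theory Submission
  imports Defs
begin

text \<open>
  A matrix of \<open>S\<close> or \<open>K\<close> is a sum of \<open>R\<close> rank-one terms \<open>\<sigma>\<^sub>r u\<^sub>r v\<^sub>r\<^sup>T\<close> with \<open>\<parallel>\<sigma>\<parallel>\<^sub>2 \<le> \<Gamma>\<close>.
  Rounding \<open>\<sigma>\<close> to a grid and each factor to a finite net of unit vectors gives, by the
  triangle inequality, a \<open>\<delta>\<close>-net whose logarithmic size is at most
  \<open>R (1 + k\<^sub>1 + k\<^sub>2) (7 log n + log x)\<close>, where \<open>x = \<Gamma> \<surd>R / \<delta>\<close> and \<open>k\<^sub>j\<close> is the sparsity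
  of the factor nets. For \<open>S\<close> one takes \<open>k\<^sub>j = s\<^sub>j\<close>, so the log-size is \<open>O(R (s\<^sub>1 + s\<^sub>2) log n \<cdot> x)\<close>.
  For \<open>K\<close> a vector with \<open>\<parallel>u\<parallel>\<^sub>1 \<le> \<surd>s\<close> is first hard-thresholded to a sparse vector, which
  allows \<open>k\<^sub>j \<approx> min (n, s\<^sub>j x\<^sup>2)\<close>; with \<open>\<alpha> = 1 / (8 log n)\<close> the resulting log-size is
  \<open>O(R (s\<^sub>1 + s\<^sub>2) log n \<cdot> x\<^bsup>2 (1 - \<alpha>)\<^esup>)\<close>. In Dudley's entropy integral the square root of
  such a bound is a multiple of \<open>(D / \<epsilon>)\<^bsup>1 - \<alpha>\<^esup>\<close>, whose integral over \<open>[0, D]\<close> is \<open>D / \<alpha>\<close>: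
  this gives the first bound with \<open>\<alpha> = 1/2\<close> and the second one, with its extra factor
  \<open>log n\<close>, with \<open>\<alpha> = 1 / (8 log n)\<close>.
\<close>

lemma vnorm2_eq_L2_set: "vnorm2 n u = L2_set u {..<n}"
  by (simp add: vnorm2_def L2_set_def)

lemma vnorm2_nonneg: "0 \<le> vnorm2 n u"
  by (simp add: vnorm2_eq_L2_set)

lemma vnorm2_cong: "(\<And>i. i < n \<Longrightarrow> f i = g i) \<Longrightarrow> vnorm2 n f = vnorm2 n g"
  by (simp add: vnorm2_def)

lemma vnorm2_scale: "vnorm2 n (\<lambda>i. c * u i) = \<bar>c\<bar> * vnorm2 n u"
proof -
  have "(\<Sum>i<n. (c * u i)\<^sup>2) = c\<^sup>2 * (\<Sum>i<n. (u i)\<^sup>2)"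
    by (simp add: power_mult_distrib sum_distrib_left)
  then show ?thesis by (simp add: vnorm2_def real_sqrt_mult)
qed

lemma abs_le_vnorm2:
  assumes "i < n"
  shows "\<bar>u i\<bar> \<le> vnorm2 n u"
proof -
  have "(u i)\<^sup>2 \<le> (\<Sum>j<n. (u j)\<^sup>2)"
    using assms by (intro member_le_sum) auto
  then show ?thesis unfolding vnorm2_def using real_sqrt_le_mono by fastforce
qed

lemma vnorm2_mono:
  assumes "\<And>i. i < n \<Longrightarrow> \<bar>f i\<bar> \<le> \<bar>g i\<bar>"
  shows "vnorm2 n f \<le> vnorm2 n g"
proof -
  have "(\<Sum>i<n. (f i)\<^sup>2) \<le> (\<Sum>i<n. (g i)\<^sup>2)"
    using assms by (intro sum_mono) (simp add: abs_le_square_iff)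
  then show ?thesis unfolding vnorm2_def by simp
qed

lemma vnorm2_triangle: "vnorm2 n (\<lambda>i. f i + g i) \<le> vnorm2 n f + vnorm2 n g"
  unfolding vnorm2_eq_L2_set by (rule L2_set_triangle_ineq)

lemma vnorm2_diff_triangle:
  "vnorm2 n (\<lambda>i. f i - h i) \<le> vnorm2 n (\<lambda>i. f i - g i) + vnorm2 n (\<lambda>i. g i - h i)"
  using vnorm2_triangle[of n "\<lambda>i. f i - g i" "\<lambda>i. g i - h i"] by simp

lemma sum_abs_le_vnorm2: "(\<Sum>i<n. \<bar>f i\<bar>) \<le> sqrt n * vnorm2 n f"
proof -
  have "(\<Sum>i<n. \<bar>f i\<bar> * \<bar>1\<bar>) \<le> L2_set f {..<n} * L2_set (\<lambda>_. 1::real) {..<n}"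
    by (rule L2_set_mult_ineq)
  then show ?thesis by (simp add: vnorm2_eq_L2_set L2_set_constant mult.commute)
qed

lemma supp_subset_vspace: "u \<in> vspace n \<Longrightarrow> supp u \<subseteq> {..<n}"
  by (auto simp: vspace_def supp_def not_less[symmetric])

lemma card_supp_le_dim: "u \<in> vspace n \<Longrightarrow> card (supp u) \<le> n"
  using card_mono[OF _ supp_subset_vspace] by fastforce

section \<open>Grid approximation of sparse vectors\<close>

lemma card_bounded_subsets_le:
  assumes "finite X"
  shows "card {A. A \<subseteq> X \<and> card A \<le> k} \<le> (card X + 1) ^ k"
proof -
  let ?L = "{xs. set xs \<subseteq> insert None (Some ` X) \<and> length xs = k}"
  let ?f = "\<lambda>xs. {x. Some x \<in> set xs}"
  have sub: "{A. A \<subseteq> X \<and> card A \<le> k} \<subseteq> ?f ` ?L"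
  proof
    fix A assume "A \<in> {A. A \<subseteq> X \<and> card A \<le> k}"
    then have AX: "A \<subseteq> X" and cA: "card A \<le> k" by auto
    then obtain xs where xs: "set xs = A" "distinct xs"
      using assms finite_distinct_list finite_subset by metis
    define ys where "ys = map Some xs @ replicate (k - length xs) None"
    have "ys \<in> ?L" using xs AX cA distinct_card[of xs] by (auto simp: ys_def)
    moreover have "?f ys = A" using xs by (auto simp: ys_def)
    ultimately show "A \<in> ?f ` ?L" by blast
  qed
  have fin: "finite ?L"
    using finite_lists_length_eq[of "insert None (Some ` X)" k] assms by auto
  have "card {A. A \<subseteq> X \<and> card A \<le> k} \<le> card ?L"
    using card_mono[OF finite_imageI[OF fin] sub] card_image_le[OF fin, of ?f] by linarith
  also have "\<dots> = (card X + 1) ^ k"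
    using card_lists_length_eq[of "insert None (Some ` X)" k] assms by (simp add: card_image)
  finally show ?thesis .
qed

definition grid_values :: "real \<Rightarrow> real set" where
  "grid_values h = (\<lambda>j. h * of_int j) ` {-\<lfloor>1/h\<rfloor>..\<lfloor>1/h\<rfloor>}"

definition grid_vectors :: "nat \<Rightarrow> nat \<Rightarrow> real \<Rightarrow> (nat \<Rightarrow> real) set" where
  "grid_vectors n k h = {w \<in> vspace n. card (supp w) \<le> k \<and> (\<forall>i. w i \<in> grid_values h)}"

definition round_to_grid :: "real \<Rightarrow> real \<Rightarrow> real" where
  "round_to_grid h a = sgn a * (h * of_int \<lfloor>\<bar>a\<bar> / h\<rfloor>)"

lemma finite_grid_values: "finite (grid_values h)"
  by (simp add: grid_values_def)

lemma card_grid_values: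
  assumes "0 < h"
  shows "real (card (grid_values h)) \<le> 2 / h + 1"
proof -
  have "card (grid_values h) \<le> card {-\<lfloor>1/h\<rfloor>..\<lfloor>1/h\<rfloor>}"
    unfolding grid_values_def by (rule card_image_le) simp
  moreover have "real (card {-\<lfloor>1/h\<rfloor>..\<lfloor>1/h\<rfloor>}) = 2 * of_int \<lfloor>1/h\<rfloor> + 1"
    using assms by simp
  moreover have "real_of_int \<lfloor>1/h\<rfloor> \<le> 1/h" by (rule of_int_floor_le)
  ultimately show ?thesis by (simp add: field_simps) linarith
qed

lemma floor_multiple_bounds:
  assumes "0 < h" "0 \<le> b"
  shows "h * of_int \<lfloor>b / h\<rfloor> \<le> b" "b - h * of_int \<lfloor>b / h\<rfloor> \<le> h" "0 \<le> h * of_int \<lfloor>b / h\<rfloor>"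
proof -
  have "of_int \<lfloor>b / h\<rfloor> \<le> b / h" "b / h < of_int \<lfloor>b / h\<rfloor> + 1"
    using floor_correct[of "b / h"] by auto
  then have "h * of_int \<lfloor>b / h\<rfloor> \<le> h * (b / h)" "h * (b / h) < h * (of_int \<lfloor>b / h\<rfloor> + 1)"
    using assms(1) by (intro mult_left_mono mult_strict_left_mono; simp)+
  then show "h * of_int \<lfloor>b / h\<rfloor> \<le> b" "b - h * of_int \<lfloor>b / h\<rfloor> \<le> h"
    using assms(1) by (simp_all add: algebra_simps)
  show "0 \<le> h * of_int \<lfloor>b / h\<rfloor>" using assms by simp
qed

lemma round_to_grid_error:
  assumes "0 < h"
  shows "\<bar>round_to_grid h a\<bar> \<le> \<bar>a\<bar>" "\<bar>a - round_to_grid h a\<bar> \<le> h"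
proof -
  let ?t = "h * of_int \<lfloor>\<bar>a\<bar> / h\<rfloor>"
  note t = floor_multiple_bounds[OF assms abs_ge_zero[of a]]
  have "a - round_to_grid h a = sgn a * (\<bar>a\<bar> - ?t)"
    by (simp add: round_to_grid_def right_diff_distrib mult_sgn_abs)
  then show "\<bar>a - round_to_grid h a\<bar> \<le> h"
    using t assms by (cases "a = 0") (simp_all add: abs_mult abs_sgn_eq)
  show "\<bar>round_to_grid h a\<bar> \<le> \<bar>a\<bar>"
    using t by (cases "a = 0") (simp_all add: round_to_grid_def abs_mult abs_sgn_eq)
qed

lemma round_to_grid_mem:
  assumes "0 < h" "\<bar>a\<bar> \<le> 1"
  shows "round_to_grid h a \<in> grid_values h"
proof -
  define j where "j = (if a < 0 then - \<lfloor>\<bar>a\<bar> / h\<rfloor> else \<lfloor>\<bar>a\<bar> / h\<rfloor>)"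
  have "\<lfloor>\<bar>a\<bar> / h\<rfloor> \<le> \<lfloor>1 / h\<rfloor>" "0 \<le> \<lfloor>\<bar>a\<bar> / h\<rfloor>"
    using assms by (auto intro!: floor_mono divide_right_mono)
  then have "j \<in> {-\<lfloor>1/h\<rfloor>..\<lfloor>1/h\<rfloor>}"
    by (auto simp only: j_def atLeastAtMost_iff split: if_split)
  moreover have "round_to_grid h a = h * of_int j"
    by (auto simp: round_to_grid_def j_def sgn_if)
  ultimately show ?thesis unfolding grid_values_def by blast
qed

lemma finite_grid_vectors_card:
  "finite (grid_vectors n k h) \<and> card (grid_vectors n k h) \<le> (n * card (grid_values h) + 1) ^ k"
proof -
  define X where "X = {..<n} \<times> grid_values h"
  \<comment> \<open>a grid vector is determined by its graph on its support, a set of at most \<open>k\<close> points\<close>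
  define graph where "graph w = (\<lambda>i. (i, w i)) ` supp w" for w :: "nat \<Rightarrow> real"
  have finX: "finite X" by (simp add: finite_grid_values X_def)
  have graph_mem: "(i, b) \<in> graph w \<longleftrightarrow> b = w i \<and> w i \<noteq> 0" for i b w
    by (auto simp: graph_def supp_def)
  have inj: "inj_on graph (grid_vectors n k h)"
  proof (rule inj_onI, rule ext)
    fix w w' i assume "graph w = graph w'"
    then have "(i, w i) \<in> graph w \<longleftrightarrow> (i, w i) \<in> graph w'" "(i, w' i) \<in> graph w \<longleftrightarrow> (i, w' i) \<in> graph w'"
      by simp_all
    then show "w i = w' i" unfolding graph_mem by auto
  qed
  have img: "graph ` grid_vectors n k h \<subseteq> {A. A \<subseteq> X \<and> card A \<le> k}"
  proof (rule image_subsetI)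
    fix w assume "w \<in> grid_vectors n k h"
    then have w: "supp w \<subseteq> {..<n}" "card (supp w) \<le> k" "\<And>i. w i \<in> grid_values h"
      using supp_subset_vspace by (auto simp: grid_vectors_def)
    then have "graph w \<subseteq> X" by (auto simp: graph_def X_def)
    moreover have "card (graph w) \<le> card (supp w)"
      unfolding graph_def by (rule card_image_le) (use w finite_subset in blast)
    ultimately show "graph w \<in> {A. A \<subseteq> X \<and> card A \<le> k}" using w by simp
  qed
  have finT: "finite {A. A \<subseteq> X \<and> card A \<le> k}"
    by (rule finite_subset[of _ "Pow X"]) (use finX in auto)
  have "card (grid_vectors n k h) = card (graph ` grid_vectors n k h)"
    using card_image[OF inj] by simp
  also have "\<dots> \<le> card {A. A \<subseteq> X \<and> card A \<le> k}" by (rule card_mono[OF finT img])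
  also have "\<dots> \<le> (card X + 1) ^ k" by (rule card_bounded_subsets_le[OF finX])
  finally show ?thesis
    using finite_imageD[OF finite_subset[OF img finT] inj] by (simp add: X_def card_cartesian_product)
qed

lemma card_grid_vectors_le:
  assumes h: "0 < h" "h \<le> 1" and n: "1 \<le> n"
  shows "real (card (grid_vectors n k h)) \<le> (4 * real n / h) ^ k"
proof -
  have "card (grid_vectors n k h) \<le> (n * card (grid_values h) + 1) ^ k"
    using finite_grid_vectors_card by blast
  then have "real (card (grid_vectors n k h)) \<le> (real n * real (card (grid_values h)) + 1) ^ k"
    by (metis of_nat_1 of_nat_add of_nat_le_iff of_nat_mult of_nat_power)
  also have "\<dots> \<le> (4 * real n / h) ^ k"
  proof (rule power_mono)
    have "real n * real (card (grid_values h)) \<le> real n * (2 / h + 1)"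
      using card_grid_values[OF h(1)] by (intro mult_left_mono) auto
    moreover have "real n * (2 / h + 1) + 1 \<le> 4 * real n / h"
    proof -
      have "real n * h \<le> real n" "h \<le> real n" using h n mult_left_mono[of h 1 "real n"] by auto
      have "real n * (2 / h + 1) + 1 = (2 * real n + real n * h + h) / h"
        using h by (simp add: field_simps)
      also have "\<dots> \<le> (4 * real n) / h"
        using \<open>real n * h \<le> real n\<close> \<open>h \<le> real n\<close> h by (intro divide_right_mono; linarith)
      finally show ?thesis by simp
    qed
    ultimately show "real n * real (card (grid_values h)) + 1 \<le> 4 * real n / h" by linarith
  qed simp
  finally show ?thesis .
qed

lemma round_to_grid_approx:
  assumes h: "0 < h" and u: "u \<in> vspace n" "vnorm2 n u \<le> 1" "card (supp u) \<le> k"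
  defines "w \<equiv> \<lambda>i. round_to_grid h (u i)"
  shows "w \<in> grid_vectors n k h" "vnorm2 n w \<le> 1" "vnorm2 n (\<lambda>i. u i - w i) \<le> h * sqrt k"
proof -
  have u1: "\<bar>u i\<bar> \<le> 1" for i
  proof (cases "i < n")
    case True
    then show ?thesis using abs_le_vnorm2[OF True, of u] u(2) by linarith
  next
    case False
    then show ?thesis using u(1) by (simp add: vspace_def)
  qed
  have w0: "u i = 0 \<Longrightarrow> w i = 0" for i by (simp add: w_def round_to_grid_def)
  have "supp w \<subseteq> supp u" using w0 by (auto simp: supp_def)
  moreover have "finite (supp u)" using supp_subset_vspace[OF u(1)] finite_subset by blast
  ultimately have "card (supp w) \<le> card (supp u)" by (simp add: card_mono)
  with u(3) have "card (supp w) \<le> k" by simp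
  moreover have "w \<in> vspace n" using u(1) w0 by (auto simp: vspace_def)
  moreover have "w i \<in> grid_values h" for i
    unfolding w_def by (rule round_to_grid_mem[OF h u1])
  ultimately show "w \<in> grid_vectors n k h" by (simp add: grid_vectors_def)
  have "vnorm2 n w \<le> vnorm2 n u"
    by (rule vnorm2_mono) (simp add: w_def round_to_grid_error[OF h])
  then show "vnorm2 n w \<le> 1" using u by simp
  have "(\<Sum>i<n. (u i - w i)\<^sup>2) = (\<Sum>i\<in>supp u. (u i - w i)\<^sup>2)"
    by (rule sum.mono_neutral_right) (use supp_subset_vspace[OF u(1)] w0 in \<open>auto simp: supp_def\<close>)
  also have "\<dots> \<le> (\<Sum>i\<in>supp u. h\<^sup>2)"
    using round_to_grid_error(2)[OF h] h
    by (intro sum_mono) (simp add: w_def abs_le_square_iff[symmetric])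
  also have "\<dots> = real (card (supp u)) * h\<^sup>2" by simp
  also have "\<dots> \<le> real k * h\<^sup>2" using u(3) by (intro mult_right_mono) auto
  finally have "sqrt (\<Sum>i<n. (u i - w i)\<^sup>2) \<le> sqrt (real k * h\<^sup>2)" by simp
  then show "vnorm2 n (\<lambda>i. u i - w i) \<le> h * sqrt k"
    using h by (simp add: vnorm2_def real_sqrt_mult mult.commute)
qed

section \<open>Nets of unit vectors\<close>

definition unit_net :: "nat \<Rightarrow> (nat \<Rightarrow> real) set \<Rightarrow> real \<Rightarrow> (nat \<Rightarrow> real) set \<Rightarrow> bool" where
  "unit_net n U \<eta> N \<longleftrightarrow> finite N \<and> (\<forall>w\<in>N. w \<in> vspace n \<and> vnorm2 n w \<le> 1) \<and>
     (\<forall>u\<in>U. \<exists>w\<in>N. vnorm2 n (\<lambda>i. u i - w i) \<le> \<eta>)"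

definition sparse_ball :: "nat \<Rightarrow> nat \<Rightarrow> (nat \<Rightarrow> real) set" where
  "sparse_ball n k = {u \<in> vspace n. card (supp u) \<le> k \<and> vnorm2 n u \<le> 1}"

lemma sparse_ball_net:
  assumes \<eta>: "0 < \<eta>" "\<eta> \<le> 1" and n: "1 \<le> n" and k: "1 \<le> k"
  shows "\<exists>N. unit_net n (sparse_ball n k) \<eta> N \<and> real (card N) \<le> (4 * real n * sqrt k / \<eta>) ^ k"
proof -
  define h where "h = \<eta> / sqrt k"
  have sk: "1 \<le> sqrt k" using k by simp
  have h: "0 < h" "h \<le> 1"
    unfolding h_def using \<eta> order_trans[OF \<eta>(2) sk] k by (auto simp: divide_le_eq_1)
  have hk: "h * sqrt k = \<eta>" "4 * real n / h = 4 * real n * sqrt k / \<eta>"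
    using sk by (simp_all add: h_def)
  define N where "N = grid_vectors n k h \<inter> {w. vnorm2 n w \<le> 1}"
  have "finite (grid_vectors n k h)" using finite_grid_vectors_card by blast
  then have fin: "finite N" and "card N \<le> card (grid_vectors n k h)"
    unfolding N_def by (simp_all add: card_mono)
  then have "real (card N) \<le> (4 * real n / h) ^ k"
    using card_grid_vectors_le[OF h n, of k] by linarith
  then have "real (card N) \<le> (4 * real n * sqrt k / \<eta>) ^ k"
    by (simp only: hk(2))
  moreover have "\<forall>w\<in>N. w \<in> vspace n \<and> vnorm2 n w \<le> 1"
    by (simp add: N_def grid_vectors_def)
  moreover have "\<exists>w\<in>N. vnorm2 n (\<lambda>i. u i - w i) \<le> \<eta>" if "u \<in> sparse_ball n k" for u
    using round_to_grid_approx[OF h(1), of u n k] that hk(1) by (auto simp: N_def sparse_ball_def)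
  ultimately show ?thesis using fin unfolding unit_net_def by blast
qed

definition threshold :: "real \<Rightarrow> (nat \<Rightarrow> real) \<Rightarrow> nat \<Rightarrow> real" where
  "threshold t u = (\<lambda>i. if t \<le> \<bar>u i\<bar> then u i else 0)"

lemma threshold_vspace: "u \<in> vspace n \<Longrightarrow> 0 < t \<Longrightarrow> threshold t u \<in> vspace n"
  by (simp add: vspace_def threshold_def)

lemma vnorm2_threshold_le: "vnorm2 n (threshold t u) \<le> vnorm2 n u"
  by (rule vnorm2_mono) (simp add: threshold_def)

lemma card_supp_threshold_le:
  assumes u: "u \<in> vspace n" and t: "0 < t"
  shows "t * card (supp (threshold t u)) \<le> vnorm1 n u"
proof -
  have "i < n" if "t \<le> \<bar>u i\<bar>" for i
  proof (rule ccontr)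
    assume "\<not> i < n"
    then have "u i = 0" using u by (simp add: vspace_def)
    then show False using that t by simp
  qed
  then have supp: "supp (threshold t u) = {i\<in>{..<n}. t \<le> \<bar>u i\<bar>}"
    using t by (auto simp: threshold_def supp_def)
  have "t * card (supp (threshold t u)) = (\<Sum>i\<in>{i\<in>{..<n}. t \<le> \<bar>u i\<bar>}. t)"
    by (simp add: supp)
  also have "\<dots> \<le> (\<Sum>i\<in>{i\<in>{..<n}. t \<le> \<bar>u i\<bar>}. \<bar>u i\<bar>)" by (rule sum_mono) simp
  also have "\<dots> \<le> (\<Sum>i<n. \<bar>u i\<bar>)" by (rule sum_mono2) auto
  finally show ?thesis by (simp add: vnorm1_def)
qed

lemma vnorm2_threshold_residual:
  assumes t: "0 \<le> t"
  shows "(vnorm2 n (\<lambda>i. u i - threshold t u i))\<^sup>2 \<le> t * vnorm1 n u"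
proof -
  have "(u i - threshold t u i)\<^sup>2 \<le> t * \<bar>u i\<bar>" for i
  proof (cases "t \<le> \<bar>u i\<bar>")
    case False
    then have "\<bar>u i\<bar> * \<bar>u i\<bar> \<le> t * \<bar>u i\<bar>" by (intro mult_right_mono) auto
    then show ?thesis using False by (simp add: threshold_def power2_eq_square)
  qed (use t in \<open>simp add: threshold_def\<close>)
  then have "(\<Sum>i<n. (u i - threshold t u i)\<^sup>2) \<le> (\<Sum>i<n. t * \<bar>u i\<bar>)" by (rule sum_mono)
  moreover have "0 \<le> (\<Sum>i<n. (u i - threshold t u i)\<^sup>2)" by (simp add: sum_nonneg)
  ultimately show ?thesis by (simp add: vnorm2_def vnorm1_def sum_distrib_left)
qed

text \<open>
  With \<open>t = \<eta>\<^sup>2 / (4 \<surd>s)\<close>, the bound \<open>\<parallel>u\<parallel>\<^sub>1 \<le> \<surd>s\<close> leaves at most \<open>\<surd>s / t = 4 s / \<eta>\<^sup>2\<close> coordinates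
  above the threshold, and the discarded part has squared norm at most \<open>t \<surd>s = (\<eta> / 2)\<^sup>2\<close>.
\<close>

lemma threshold_approx_K_set:
  assumes u: "u \<in> K_set n s" and \<eta>: "0 < \<eta>" and s: "1 \<le> s"
    and k_large: "n \<le> k \<or> 4 * real s \<le> real k * \<eta>\<^sup>2"
  defines "t \<equiv> \<eta>\<^sup>2 / (4 * sqrt s)"
  shows "threshold t u \<in> sparse_ball n k" "vnorm2 n (\<lambda>i. u i - threshold t u i) \<le> \<eta> / 2"
proof -
  have ss: "0 < sqrt s" using s by simp
  have t: "0 < t" "sqrt s * t = (\<eta> / 2)\<^sup>2"
    unfolding t_def using \<eta> ss by (simp_all add: field_simps power2_eq_square)
  have u: "u \<in> vspace n" "vnorm2 n u \<le> 1" "vnorm1 n u \<le> sqrt s"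
    using assms(1) by (auto simp: K_set_def)
  have "card (supp (threshold t u)) \<le> k"
  proof (cases "n \<le> k")
    case True
    then show ?thesis using card_supp_le_dim[OF threshold_vspace[OF u(1) t(1)]] by simp
  next
    case False
    then have large: "4 * real s \<le> real k * \<eta>\<^sup>2" using k_large by simp
    have "t * card (supp (threshold t u)) \<le> sqrt s"
      using card_supp_threshold_le[OF u(1) t(1)] u(3) by linarith
    then have "sqrt s * (t * card (supp (threshold t u))) \<le> sqrt s * sqrt s"
      using ss by (intro mult_left_mono) auto
    moreover have "sqrt s * (t * card (supp (threshold t u))) = card (supp (threshold t u)) * \<eta>\<^sup>2 / 4"
      by (simp only: mult.assoc[symmetric] t(2) power_divide) simp
    moreover have "sqrt s * sqrt s = real s" by simp
    ultimately have "card (supp (threshold t u)) * \<eta>\<^sup>2 \<le> real k * \<eta>\<^sup>2"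
      using large by linarith
    then show ?thesis using \<eta> by simp
  qed
  then show "threshold t u \<in> sparse_ball n k"
    using threshold_vspace[OF u(1) t(1)] vnorm2_threshold_le[of n t u] u(2)
    by (simp add: sparse_ball_def)
  have "t * vnorm1 n u \<le> t * sqrt s" using t(1) u(3) by (intro mult_left_mono) auto
  moreover have "t * sqrt s = (\<eta> / 2)\<^sup>2" using t(2) by (simp only: mult.commute)
  ultimately have "(vnorm2 n (\<lambda>i. u i - threshold t u i))\<^sup>2 \<le> (\<eta> / 2)\<^sup>2"
    using vnorm2_threshold_residual[of t n u] t(1) by linarith
  then show "vnorm2 n (\<lambda>i. u i - threshold t u i) \<le> \<eta> / 2"
    using \<eta> by (simp add: power2_le_iff_abs_le vnorm2_nonneg)
qed

lemma K_set_net: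
  assumes \<eta>: "0 < \<eta>" "\<eta> \<le> 1" and n: "1 \<le> n" and s: "1 \<le> s" and k: "1 \<le> k"
    and k_large: "n \<le> k \<or> 4 * real s \<le> real k * \<eta>\<^sup>2"
  shows "\<exists>N. unit_net n (K_set n s) \<eta> N \<and> real (card N) \<le> (8 * real n * sqrt k / \<eta>) ^ k"
proof -
  have "0 < \<eta> / 2" "\<eta> / 2 \<le> 1" using \<eta> by simp_all
  then obtain N where N: "unit_net n (sparse_ball n k) (\<eta> / 2) N"
    and card_N: "real (card N) \<le> (4 * real n * sqrt k / (\<eta> / 2)) ^ k"
    using sparse_ball_net[OF _ _ n k] by blast
  have "\<exists>w\<in>N. vnorm2 n (\<lambda>i. u i - w i) \<le> \<eta>" if u: "u \<in> K_set n s" for u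
  proof -
    let ?v = "threshold (\<eta>\<^sup>2 / (4 * sqrt s)) u"
    note v = threshold_approx_K_set[OF u \<eta>(1) s k_large]
    obtain w where w: "w \<in> N" "vnorm2 n (\<lambda>i. ?v i - w i) \<le> \<eta> / 2"
      using N v(1) by (auto simp: unit_net_def)
    then have "vnorm2 n (\<lambda>i. u i - w i) \<le> \<eta>"
      using v(2) vnorm2_diff_triangle[of n u w ?v] by linarith
    then show ?thesis using w(1) by blast
  qed
  moreover have "4 * real n * sqrt k / (\<eta> / 2) = 8 * real n * sqrt k / \<eta>" by simp
  ultimately show ?thesis
    using N card_N unfolding unit_net_def by (intro exI[of _ N]) (simp add: mult.assoc)
qed

lemma coefficient_net:
  assumes \<Gamma>: "0 < \<Gamma>" and \<eta>: "0 < \<eta>" "\<eta> \<le> 1" and R: "1 \<le> R"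
  shows "\<exists>NS. finite NS \<and> real (card NS) \<le> (4 * real R * sqrt R / \<eta>) ^ R \<and>
    (\<forall>s\<in>NS. vnorm2 R s \<le> \<Gamma>) \<and>
    (\<forall>\<sigma>. vnorm2 R \<sigma> \<le> \<Gamma> \<longrightarrow> (\<exists>s\<in>NS. vnorm2 R (\<lambda>r. \<sigma> r - s r) \<le> \<Gamma> * \<eta>))"
proof -
  obtain N where N: "unit_net R (sparse_ball R R) \<eta> N"
    and card_N: "real (card N) \<le> (4 * real R * sqrt R / \<eta>) ^ R"
    using sparse_ball_net[OF \<eta> R R] by blast
  define NS where "NS = (\<lambda>w r. \<Gamma> * w r) ` N"
  have "finite N" using N by (simp add: unit_net_def)
  then have "finite NS" "card NS \<le> card N" unfolding NS_def by (simp_all add: card_image_le)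
  moreover have "vnorm2 R s \<le> \<Gamma>" if "s \<in> NS" for s
    using that N \<Gamma> by (auto simp: NS_def unit_net_def vnorm2_scale intro: mult_left_le)
  moreover have "\<exists>s\<in>NS. vnorm2 R (\<lambda>r. \<sigma> r - s r) \<le> \<Gamma> * \<eta>" if \<sigma>: "vnorm2 R \<sigma> \<le> \<Gamma>" for \<sigma>
  proof -
    define v where "v r = (if r < R then \<sigma> r / \<Gamma> else 0)" for r
    have "vnorm2 R v = vnorm2 R (\<lambda>r. (1 / \<Gamma>) * \<sigma> r)" by (rule vnorm2_cong) (simp add: v_def)
    also have "\<dots> = vnorm2 R \<sigma> / \<Gamma>" using \<Gamma> by (simp only: vnorm2_scale) simp
    also have "\<dots> \<le> 1" using \<sigma> \<Gamma> by (simp add: pos_divide_le_eq)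
    finally have "v \<in> sparse_ball R R"
      using card_supp_le_dim[of v R] by (simp add: sparse_ball_def vspace_def v_def)
    then obtain w where w: "w \<in> N" "vnorm2 R (\<lambda>r. v r - w r) \<le> \<eta>"
      using N by (auto simp: unit_net_def)
    have "vnorm2 R (\<lambda>r. \<sigma> r - \<Gamma> * w r) = vnorm2 R (\<lambda>r. \<Gamma> * (v r - w r))"
      using \<Gamma> by (intro vnorm2_cong) (simp add: v_def algebra_simps)
    also have "\<dots> \<le> \<Gamma> * \<eta>" using w \<Gamma> by (simp add: vnorm2_scale)
    finally have "vnorm2 R (\<lambda>r. \<sigma> r - \<Gamma> * w r) \<le> \<Gamma> * \<eta>" .
    moreover have "(\<lambda>r. \<Gamma> * w r) \<in> NS" using w(1) by (simp add: NS_def)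
    ultimately show ?thesis by fastforce
  qed
  ultimately show ?thesis using card_N by (meson of_nat_le_iff order_trans)
qed

section \<open>Frobenius distance and nets of low-rank matrices\<close>

definition fnorm :: "nat \<Rightarrow> nat \<Rightarrow> (nat \<Rightarrow> nat \<Rightarrow> real) \<Rightarrow> real" where
  "fnorm n1 n2 Z = sqrt (\<Sum>i<n1. \<Sum>j<n2. (Z i j)\<^sup>2)"

lemma fnorm_eq_L2_set: "fnorm n1 n2 Z = L2_set (\<lambda>p. Z (fst p) (snd p)) ({..<n1} \<times> {..<n2})"
  unfolding fnorm_def L2_set_def by (simp add: sum.cartesian_product case_prod_beta)

lemma frob_dist_eq_fnorm: "frob_dist n1 n2 Z W = fnorm n1 n2 (\<lambda>i j. Z i j - W i j)"
  by (simp add: frob_dist_def fnorm_def)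

lemma fnorm_triangle: "fnorm n1 n2 (\<lambda>i j. Z i j + W i j) \<le> fnorm n1 n2 Z + fnorm n1 n2 W"
  unfolding fnorm_eq_L2_set by (rule L2_set_triangle_ineq)

lemma fnorm_sum_le:
  assumes "finite A"
  shows "fnorm n1 n2 (\<lambda>i j. \<Sum>r\<in>A. T r i j) \<le> (\<Sum>r\<in>A. fnorm n1 n2 (T r))"
  using assms
proof (induction A rule: finite_induct)
  case empty
  then show ?case by (simp add: fnorm_def)
next
  case (insert x F)
  have "fnorm n1 n2 (\<lambda>i j. \<Sum>r\<in>insert x F. T r i j)
      = fnorm n1 n2 (\<lambda>i j. T x i j + (\<Sum>r\<in>F. T r i j))"
    using insert by simp
  also have "\<dots> \<le> fnorm n1 n2 (T x) + fnorm n1 n2 (\<lambda>i j. \<Sum>r\<in>F. T r i j)"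
    by (rule fnorm_triangle)
  also have "\<dots> \<le> fnorm n1 n2 (T x) + (\<Sum>r\<in>F. fnorm n1 n2 (T r))" using insert by simp
  finally show ?case using insert by simp
qed

lemma fnorm_rank_one: "fnorm n1 n2 (\<lambda>i j. c * a i * b j) = \<bar>c\<bar> * vnorm2 n1 a * vnorm2 n2 b"
proof -
  have "(\<Sum>i<n1. (a i)\<^sup>2) * (\<Sum>j<n2. (b j)\<^sup>2) = (\<Sum>i<n1. \<Sum>j<n2. (a i)\<^sup>2 * (b j)\<^sup>2)"
    by (rule sum_product)
  moreover have "(\<Sum>i<n1. \<Sum>j<n2. (c * a i * b j)\<^sup>2) = c\<^sup>2 * (\<Sum>i<n1. \<Sum>j<n2. (a i)\<^sup>2 * (b j)\<^sup>2)"
    by (simp add: power_mult_distrib sum_distrib_left mult_ac)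
  ultimately have "(\<Sum>i<n1. \<Sum>j<n2. (c * a i * b j)\<^sup>2) = c\<^sup>2 * ((\<Sum>i<n1. (a i)\<^sup>2) * (\<Sum>j<n2. (b j)\<^sup>2))"
    by simp
  then show ?thesis by (simp add: fnorm_def vnorm2_def real_sqrt_mult)
qed

lemma fnorm_rank_one_le:
  assumes "vnorm2 n1 a \<le> p" "vnorm2 n2 b \<le> q" "0 \<le> p"
  shows "fnorm n1 n2 (\<lambda>i j. c * a i * b j) \<le> \<bar>c\<bar> * (p * q)"
proof -
  have "vnorm2 n1 a * vnorm2 n2 b \<le> p * q"
    using assms by (intro mult_mono) (auto simp: vnorm2_nonneg)
  then have "\<bar>c\<bar> * vnorm2 n1 a * vnorm2 n2 b \<le> \<bar>c\<bar> * (p * q)"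
    by (simp only: mult.assoc) (rule mult_left_mono, auto)
  then show ?thesis by (simp only: fnorm_rank_one)
qed

lemma fnorm_rank_one_diff_le:
  assumes "vnorm2 n1 a \<le> 1" "vnorm2 n2 b \<le> 1" "vnorm2 n1 a' \<le> 1"
    and "vnorm2 n1 (\<lambda>i. a i - a' i) \<le> \<eta>" "vnorm2 n2 (\<lambda>j. b j - b' j) \<le> \<eta>"
  shows "fnorm n1 n2 (\<lambda>i j. c * a i * b j - c' * a' i * b' j) \<le> \<bar>c - c'\<bar> + 2 * \<bar>c'\<bar> * \<eta>"
proof -
  let ?T1 = "\<lambda>i j. (c - c') * a i * b j"
  let ?T2 = "\<lambda>i j. c' * (a i - a' i) * b j"
  let ?T3 = "\<lambda>i j. c' * a' i * (b j - b' j)"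
  have "0 \<le> \<eta>" using vnorm2_nonneg assms(4) by (rule order_trans)
  have "(\<lambda>i j. c * a i * b j - c' * a' i * b' j) = (\<lambda>i j. (?T1 i j + ?T2 i j) + ?T3 i j)"
    by (intro ext) (simp add: algebra_simps)
  moreover have "fnorm n1 n2 (\<lambda>i j. (?T1 i j + ?T2 i j) + ?T3 i j)
      \<le> fnorm n1 n2 ?T1 + fnorm n1 n2 ?T2 + fnorm n1 n2 ?T3"
    using fnorm_triangle[of n1 n2 ?T1 ?T2] fnorm_triangle[of n1 n2 "\<lambda>i j. ?T1 i j + ?T2 i j" ?T3]
    by linarith
  moreover have "fnorm n1 n2 ?T1 \<le> \<bar>c - c'\<bar> * (1 * 1)"
    using assms by (intro fnorm_rank_one_le) auto
  moreover have "fnorm n1 n2 ?T2 \<le> \<bar>c'\<bar> * (\<eta> * 1)"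
    using assms \<open>0 \<le> \<eta>\<close> by (intro fnorm_rank_one_le) auto
  moreover have "fnorm n1 n2 ?T3 \<le> \<bar>c'\<bar> * (1 * \<eta>)"
    using assms by (intro fnorm_rank_one_le) auto
  ultimately show ?thesis by simp
qed

lemma frob_dist_rank_sum_le:
  assumes uv: "\<And>r. r < R \<Longrightarrow> vnorm2 n1 (u r) \<le> 1 \<and> vnorm2 n2 (v r) \<le> 1 \<and> vnorm2 n1 (u' r) \<le> 1
      \<and> vnorm2 n1 (\<lambda>i. u r i - u' r i) \<le> \<eta> \<and> vnorm2 n2 (\<lambda>j. v r j - v' r j) \<le> \<eta>"
    and \<sigma>': "vnorm2 R \<sigma>' \<le> \<Gamma>" and \<eta>: "0 \<le> \<eta>"
  shows "frob_dist n1 n2 (rank_sum R \<sigma> u v) (rank_sum R \<sigma>' u' v')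
    \<le> sqrt R * vnorm2 R (\<lambda>r. \<sigma> r - \<sigma>' r) + 2 * sqrt R * \<Gamma> * \<eta>"
proof -
  have "frob_dist n1 n2 (rank_sum R \<sigma> u v) (rank_sum R \<sigma>' u' v')
      = fnorm n1 n2 (\<lambda>i j. \<Sum>r<R. \<sigma> r * u r i * v r j - \<sigma>' r * u' r i * v' r j)"
    by (simp add: frob_dist_eq_fnorm rank_sum_def sum_subtractf)
  also have "\<dots> \<le> (\<Sum>r<R. fnorm n1 n2 (\<lambda>i j. \<sigma> r * u r i * v r j - \<sigma>' r * u' r i * v' r j))"
    by (rule fnorm_sum_le) simp
  also have "\<dots> \<le> (\<Sum>r<R. \<bar>\<sigma> r - \<sigma>' r\<bar> + 2 * \<bar>\<sigma>' r\<bar> * \<eta>)"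
    using uv by (intro sum_mono fnorm_rank_one_diff_le) auto
  also have "\<dots> = (\<Sum>r<R. \<bar>\<sigma> r - \<sigma>' r\<bar>) + 2 * \<eta> * (\<Sum>r<R. \<bar>\<sigma>' r\<bar>)"
    by (simp add: sum.distrib sum_distrib_left mult_ac)
  also have "\<dots> \<le> sqrt R * vnorm2 R (\<lambda>r. \<sigma> r - \<sigma>' r) + 2 * \<eta> * (sqrt R * \<Gamma>)"
  proof -
    have "(\<Sum>r<R. \<bar>\<sigma>' r\<bar>) \<le> sqrt R * \<Gamma>"
      using sum_abs_le_vnorm2[where n=R and f=\<sigma>'] \<sigma>' mult_left_mono[OF \<sigma>', of "sqrt R"] by simp
    then show ?thesis
      using sum_abs_le_vnorm2[where n=R and f="\<lambda>r. \<sigma> r - \<sigma>' r"] \<eta> by (smt (verit) mult_left_mono)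
  qed
  finally show ?thesis by (simp add: mult_ac)
qed

definition frob_net :: "nat \<Rightarrow> nat \<Rightarrow> (nat \<Rightarrow> nat \<Rightarrow> real) set \<Rightarrow> real \<Rightarrow> (nat \<Rightarrow> nat \<Rightarrow> real) set \<Rightarrow> bool"
  where "frob_net n1 n2 M \<delta> C \<longleftrightarrow>
    finite C \<and> C \<subseteq> mat_space n1 n2 \<and> (\<forall>Z\<in>M. \<exists>W\<in>C. frob_dist n1 n2 Z W \<le> \<delta>)"

lemma covering_number_eq_Inf: "covering_number n1 n2 M \<delta> = Inf {card C | C. frob_net n1 n2 M \<delta> C}"
  by (simp add: covering_number_def frob_net_def)

lemma covering_number_le_card: "frob_net n1 n2 M \<delta> C \<Longrightarrow> covering_number n1 n2 M \<delta> \<le> card C"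
  unfolding covering_number_eq_Inf by (rule cInf_lower) auto

lemma covering_number_antimono:
  assumes "frob_net n1 n2 M \<delta> C" "\<delta> \<le> \<delta>'"
  shows "covering_number n1 n2 M \<delta>' \<le> covering_number n1 n2 M \<delta>"
  unfolding covering_number_eq_Inf
proof (rule cInf_superset_mono)
  show "{card C |C. frob_net n1 n2 M \<delta> C} \<noteq> {}" using assms(1) by blast
  show "bdd_below {card C |C. frob_net n1 n2 M \<delta>' C}" by (rule bdd_belowI[of _ 0]) auto
  show "{card C |C. frob_net n1 n2 M \<delta> C} \<subseteq> {card C |C. frob_net n1 n2 M \<delta>' C}"
    using assms(2) by (force simp: frob_net_def)
qed

lemma rank_sum_mat_space:
  assumes "\<And>r. r < R \<Longrightarrow> u r \<in> vspace n1 \<and> v r \<in> vspace n2"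
  shows "rank_sum R \<sigma> u v \<in> mat_space n1 n2"
  unfolding mat_space_def rank_sum_def
proof (intro CollectI allI impI)
  fix i j assume "n1 \<le> i \<or> n2 \<le> j"
  then have "\<forall>r\<in>{..<R}. \<sigma> r * u r i * v r j = 0" using assms by (auto simp: vspace_def)
  then show "(\<Sum>r<R. \<sigma> r * u r i * v r j) = 0" by (intro sum.neutral) blast
qed

lemma unit_net_choice:
  assumes "unit_net n U \<eta> N" "\<And>r. r < R \<Longrightarrow> u r \<in> U"
  shows "\<exists>u'\<in>PiE {..<R} (\<lambda>_. N). \<forall>r<R. vnorm2 n (\<lambda>i. u r i - u' r i) \<le> \<eta>"
proof -
  have "\<forall>r\<in>{..<R}. \<exists>w. w \<in> N \<and> vnorm2 n (\<lambda>i. u r i - w i) \<le> \<eta>"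
    using assms unfolding unit_net_def by blast
  from bchoice[OF this] obtain f where f: "\<forall>r\<in>{..<R}. f r \<in> N \<and> vnorm2 n (\<lambda>i. u r i - f r i) \<le> \<eta>"
    by blast
  show ?thesis by (rule bexI[of _ "restrict f {..<R}"]) (use f in auto)
qed

lemma rank_sum_approx:
  assumes NS: "\<And>s. s \<in> NS \<Longrightarrow> vnorm2 R s \<le> \<Gamma>"
      "\<And>\<sigma>. vnorm2 R \<sigma> \<le> \<Gamma> \<Longrightarrow> \<exists>s\<in>NS. vnorm2 R (\<lambda>r. \<sigma> r - s r) \<le> a"
    and NU: "unit_net n1 U \<eta> NU" and NV: "unit_net n2 V \<eta> NV"
    and U: "\<And>u. u \<in> U \<Longrightarrow> vnorm2 n1 u \<le> 1" and V: "\<And>v. v \<in> V \<Longrightarrow> vnorm2 n2 v \<le> 1"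
    and \<eta>: "0 \<le> \<eta>" and \<sigma>: "vnorm2 R \<sigma> \<le> \<Gamma>" and uv: "\<forall>r<R. u r \<in> U \<and> v r \<in> V"
  shows "\<exists>s\<in>NS. \<exists>u'\<in>PiE {..<R} (\<lambda>_. NU). \<exists>v'\<in>PiE {..<R} (\<lambda>_. NV).
    frob_dist n1 n2 (rank_sum R \<sigma> u v) (rank_sum R s u' v') \<le> sqrt R * a + 2 * sqrt R * \<Gamma> * \<eta>"
proof -
  obtain s where s: "s \<in> NS" "vnorm2 R (\<lambda>r. \<sigma> r - s r) \<le> a" using NS(2)[OF \<sigma>] by blast
  have uU: "\<And>r. r < R \<Longrightarrow> u r \<in> U" and vV: "\<And>r. r < R \<Longrightarrow> v r \<in> V" using uv by blast+
  obtain u' where u': "u' \<in> PiE {..<R} (\<lambda>_. NU)" "\<forall>r<R. vnorm2 n1 (\<lambda>i. u r i - u' r i) \<le> \<eta>"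
    using unit_net_choice[OF NU uU] ..
  obtain v' where v': "v' \<in> PiE {..<R} (\<lambda>_. NV)" "\<forall>r<R. vnorm2 n2 (\<lambda>j. v r j - v' r j) \<le> \<eta>"
    using unit_net_choice[OF NV vV] ..
  have "frob_dist n1 n2 (rank_sum R \<sigma> u v) (rank_sum R s u' v')
      \<le> sqrt R * vnorm2 R (\<lambda>r. \<sigma> r - s r) + 2 * sqrt R * \<Gamma> * \<eta>"
  proof (rule frob_dist_rank_sum_le[OF _ NS(1)[OF s(1)] \<eta>])
    fix r assume r: "r < R"
    then have "u' r \<in> NU" using u'(1) by auto
    then have "vnorm2 n1 (u' r) \<le> 1" using NU by (simp add: unit_net_def)
    then show "vnorm2 n1 (u r) \<le> 1 \<and> vnorm2 n2 (v r) \<le> 1 \<and> vnorm2 n1 (u' r) \<le> 1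
      \<and> vnorm2 n1 (\<lambda>i. u r i - u' r i) \<le> \<eta> \<and> vnorm2 n2 (\<lambda>j. v r j - v' r j) \<le> \<eta>"
      using U V uv u'(2) v'(2) r by blast
  qed
  also have "\<dots> \<le> sqrt R * a + 2 * sqrt R * \<Gamma> * \<eta>"
    using s(2) by (intro add_right_mono mult_left_mono) auto
  finally show ?thesis using s(1) u'(1) v'(1) by blast
qed

lemma rank_sum_net:
  assumes NS: "finite NS" "\<And>s. s \<in> NS \<Longrightarrow> vnorm2 R s \<le> \<Gamma>"
      "\<And>\<sigma>. vnorm2 R \<sigma> \<le> \<Gamma> \<Longrightarrow> \<exists>s\<in>NS. vnorm2 R (\<lambda>r. \<sigma> r - s r) \<le> a"
    and NU: "unit_net n1 U \<eta> NU" and NV: "unit_net n2 V \<eta> NV"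
    and U: "\<And>u. u \<in> U \<Longrightarrow> vnorm2 n1 u \<le> 1" and V: "\<And>v. v \<in> V \<Longrightarrow> vnorm2 n2 v \<le> 1"
    and \<eta>: "0 \<le> \<eta>"
    and M: "M \<subseteq> {rank_sum R \<sigma> u v | \<sigma> u v. vnorm2 R \<sigma> \<le> \<Gamma> \<and> (\<forall>r<R. u r \<in> U \<and> v r \<in> V)}"
  shows "\<exists>C. frob_net n1 n2 M (sqrt R * a + 2 * sqrt R * \<Gamma> * \<eta>) C
    \<and> card C \<le> card NS * card NU ^ R * card NV ^ R"
proof -
  define P where "P = NS \<times> PiE {..<R} (\<lambda>_. NU) \<times> PiE {..<R} (\<lambda>_. NV)"
  define C where "C = (\<lambda>(s, u, v). rank_sum R s u v) ` P"
  have "finite NU" "finite NV" using NU NV by (simp_all add: unit_net_def)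
  then have finP: "finite P" unfolding P_def using NS(1) by (simp add: finite_PiE)
  have "card C \<le> card P" unfolding C_def by (rule card_image_le[OF finP])
  also have "card P = card NS * card NU ^ R * card NV ^ R"
    unfolding P_def by (simp add: card_cartesian_product card_PiE)
  finally have card_C: "card C \<le> card NS * card NU ^ R * card NV ^ R" .
  have "C \<subseteq> mat_space n1 n2"
  proof
    fix Z assume "Z \<in> C"
    then obtain s u v where "(s, u, v) \<in> P" and Z: "Z = rank_sum R s u v" unfolding C_def by auto
    then have "\<And>r. r < R \<Longrightarrow> u r \<in> NU \<and> v r \<in> NV" by (auto simp: P_def)
    then show "Z \<in> mat_space n1 n2"
      unfolding Z using NU NV by (intro rank_sum_mat_space) (auto simp: unit_net_def)
  qed
  moreover have "\<exists>W\<in>C. frob_dist n1 n2 Z W \<le> sqrt R * a + 2 * sqrt R * \<Gamma> * \<eta>" if "Z \<in> M" for Z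
  proof -
    have "Z \<in> {rank_sum R \<sigma> u v | \<sigma> u v. vnorm2 R \<sigma> \<le> \<Gamma> \<and> (\<forall>r<R. u r \<in> U \<and> v r \<in> V)}"
      using M \<open>Z \<in> M\<close> by (rule subsetD)
    then have "\<exists>\<sigma> u v. Z = rank_sum R \<sigma> u v \<and> vnorm2 R \<sigma> \<le> \<Gamma> \<and> (\<forall>r<R. u r \<in> U \<and> v r \<in> V)"
      by blast
    then obtain \<sigma> u v where Z: "Z = rank_sum R \<sigma> u v" and \<sigma>: "vnorm2 R \<sigma> \<le> \<Gamma>"
      and uv: "\<forall>r<R. u r \<in> U \<and> v r \<in> V"
      by blast
    from rank_sum_approx[OF NS(2) NS(3) NU NV U V \<eta> \<sigma> uv] obtain s u' v' where "(s, u', v') \<in> P"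
      and "frob_dist n1 n2 Z (rank_sum R s u' v') \<le> sqrt R * a + 2 * sqrt R * \<Gamma> * \<eta>"
      unfolding Z P_def by blast
    moreover have "rank_sum R s u' v' \<in> C"
      unfolding C_def by (rule rev_image_eqI[OF \<open>(s, u', v') \<in> P\<close>]) simp
    ultimately show ?thesis by blast
  qed
  moreover have "finite C" using finP by (simp add: C_def)
  ultimately have "frob_net n1 n2 M (sqrt R * a + 2 * sqrt R * \<Gamma> * \<eta>) C"
    unfolding frob_net_def by blast
  with card_C show ?thesis by blast
qed

lemma low_rank_net:
  assumes \<Gamma>: "0 < \<Gamma>" and \<eta>: "0 < \<eta>" "\<eta> \<le> 1" and R: "1 \<le> R"
    and NU: "unit_net n1 U \<eta> NU" and NV: "unit_net n2 V \<eta> NV"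
    and U: "\<And>u. u \<in> U \<Longrightarrow> vnorm2 n1 u \<le> 1" and V: "\<And>v. v \<in> V \<Longrightarrow> vnorm2 n2 v \<le> 1"
    and M: "M \<subseteq> {rank_sum R \<sigma> u v | \<sigma> u v. vnorm2 R \<sigma> \<le> \<Gamma> \<and> (\<forall>r<R. u r \<in> U \<and> v r \<in> V)}"
  shows "\<exists>C. frob_net n1 n2 M (3 * sqrt R * \<Gamma> * \<eta>) C \<and>
    real (card C) \<le> (4 * real R * sqrt R / \<eta>) ^ R * real (card NU) ^ R * real (card NV) ^ R"
proof -
  obtain NS where NS: "finite NS" "real (card NS) \<le> (4 * real R * sqrt R / \<eta>) ^ R"
    "\<And>s. s \<in> NS \<Longrightarrow> vnorm2 R s \<le> \<Gamma>"
    "\<And>\<sigma>. vnorm2 R \<sigma> \<le> \<Gamma> \<Longrightarrow> \<exists>s\<in>NS. vnorm2 R (\<lambda>r. \<sigma> r - s r) \<le> \<Gamma> * \<eta>"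
    using coefficient_net[OF \<Gamma> \<eta> R] by blast
  have "sqrt R * (\<Gamma> * \<eta>) + 2 * sqrt R * \<Gamma> * \<eta> = 3 * sqrt R * \<Gamma> * \<eta>"
    by (simp add: algebra_simps)
  then obtain C where C: "frob_net n1 n2 M (3 * sqrt R * \<Gamma> * \<eta>) C"
    and card_C: "card C \<le> card NS * card NU ^ R * card NV ^ R"
    using rank_sum_net[OF NS(1,3,4) NU NV U V _ M] \<eta> by (metis less_eq_real_def)
  have "real (card C) \<le> real (card NS) * real (card NU) ^ R * real (card NV) ^ R"
    using card_C by (metis of_nat_le_iff of_nat_mult of_nat_power)
  also have "\<dots> \<le> (4 * real R * sqrt R / \<eta>) ^ R * real (card NU) ^ R * real (card NV) ^ R"
    using NS(2) by (intro mult_right_mono) auto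
  finally show ?thesis using C by blast
qed

section \<open>Size of the nets\<close>

lemma ln_net_base_le:
  fixes N a b c \<eta> :: real
  assumes N: "2 \<le> N" and \<eta>: "0 < \<eta>" and c: "0 < c" "c \<le> 8"
    and a: "1 \<le> a" "a \<le> N" and b: "1 \<le> b" "b \<le> N"
  shows "ln (c * a * sqrt b / \<eta>) \<le> 7 * ln N + ln (1 / (3 * \<eta>))"
proof -
  define y where "y = 1 / (3 * \<eta>)"
  have y: "0 < y" "c * a * sqrt b / \<eta> = (3 * c) * a * sqrt b * y" using \<eta> by (simp_all add: y_def)
  have "ln ((3 * c) * a * sqrt b * y) = ln (3 * c) + ln a + ln (sqrt b) + ln y"
    using a b c y(1) by (simp add: ln_mult)
  then have "ln (c * a * sqrt b / \<eta>) = ln (3 * c) + ln a + ln b / 2 + ln (1 / (3 * \<eta>))"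
    using b by (simp add: y(2) ln_sqrt y_def)
  moreover have "ln (3 * c) \<le> 5 * ln N"
  proof -
    have "ln (3 * c) \<le> ln (2 ^ 5)" using c by simp
    also have "\<dots> = 5 * ln 2" by (simp only: ln_realpow of_nat_numeral)
    also have "\<dots> \<le> 5 * ln N" using N by simp
    finally show ?thesis .
  qed
  moreover have "ln a \<le> ln N" "ln b \<le> ln N" "0 \<le> ln N" using a b N by simp_all
  ultimately show ?thesis by linarith
qed

lemma one_le_net_base:
  fixes a b c \<eta> :: real
  assumes "0 < \<eta>" "\<eta> \<le> 1" "1 \<le> c" "1 \<le> a" "1 \<le> b"
  shows "1 \<le> c * a * sqrt b / \<eta>"
proof -
  have "1 * 1 * 1 \<le> c * a * sqrt b" using assms by (intro mult_mono) auto
  then show ?thesis using assms by (simp add: le_divide_eq_1)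
qed

lemma ln_le_of_power_bound:
  assumes c: "real c \<le> A ^ R * b1 ^ R * b2 ^ R"
    and b: "0 \<le> b1" "b1 \<le> B ^ k1" "0 \<le> b2" "b2 \<le> D ^ k2"
    and ge1: "1 \<le> A" "1 \<le> B" "1 \<le> D" and le: "ln A \<le> Q" "ln B \<le> Q" "ln D \<le> Q"
  shows "ln (real c) \<le> real R * (1 + real k1 + real k2) * Q"
proof -
  have Q: "0 \<le> Q" using ln_ge_zero[OF ge1(1)] le(1) by linarith
  have "A ^ R * b1 ^ R * b2 ^ R \<le> A ^ R * (B ^ k1) ^ R * (D ^ k2) ^ R"
    using b ge1 by (intro mult_mono power_mono) simp_all
  with c have c': "real c \<le> A ^ R * (B ^ k1) ^ R * (D ^ k2) ^ R" by linarith
  have "ln (A ^ R * (B ^ k1) ^ R * (D ^ k2) ^ R) = real R * ln A + real R * real k1 * ln B + real R * real k2 * ln D"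
    using ge1 by (simp add: ln_mult ln_realpow power_mult[symmetric] ln_powr)
  also have "\<dots> \<le> real R * Q + real R * real k1 * Q + real R * real k2 * Q"
    using le by (intro add_mono mult_left_mono) auto
  also have "\<dots> = real R * (1 + real k1 + real k2) * Q" by (simp add: algebra_simps)
  finally have le_Q: "ln (A ^ R * (B ^ k1) ^ R * (D ^ k2) ^ R) \<le> real R * (1 + real k1 + real k2) * Q" .
  show ?thesis
  proof (cases "c = 0")
    case True
    then show ?thesis using Q by simp
  next
    case False
    then have "ln (real c) \<le> ln (A ^ R * (B ^ k1) ^ R * (D ^ k2) ^ R)" using c' by simp
    with le_Q show ?thesis by linarith
  qed
qed

lemma low_rank_net_ln_card:
  fixes N :: real
  assumes N: "2 \<le> N" "real n1 \<le> N" "real n2 \<le> N" "real R \<le> N"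
    and n: "1 \<le> n1" "1 \<le> n2" and R: "1 \<le> R" and \<Gamma>: "0 < \<Gamma>"
    and \<delta>: "0 < \<delta>" "\<delta> \<le> \<Gamma> * sqrt R"
    and k: "1 \<le> k1" "real k1 \<le> N" "1 \<le> k2" "real k2 \<le> N"
    and NU: "unit_net n1 U \<eta> NU" "real (card NU) \<le> (8 * real n1 * sqrt k1 / \<eta>) ^ k1"
    and NV: "unit_net n2 V \<eta> NV" "real (card NV) \<le> (8 * real n2 * sqrt k2 / \<eta>) ^ k2"
    and U: "\<And>u. u \<in> U \<Longrightarrow> vnorm2 n1 u \<le> 1" and V: "\<And>v. v \<in> V \<Longrightarrow> vnorm2 n2 v \<le> 1"
    and M: "M \<subseteq> {rank_sum R \<sigma> u v | \<sigma> u v. vnorm2 R \<sigma> \<le> \<Gamma> \<and> (\<forall>r<R. u r \<in> U \<and> v r \<in> V)}"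
    and \<eta>_eq: "\<eta> = \<delta> / (3 * \<Gamma> * sqrt R)"
  shows "\<exists>C. frob_net n1 n2 M \<delta> C \<and>
    ln (real (card C)) \<le> real R * (1 + real k1 + real k2) * (7 * ln N + ln (\<Gamma> * sqrt R / \<delta>))"
proof -
  have sR: "1 \<le> sqrt R" using R by simp
  have \<eta>: "0 < \<eta>" "\<eta> \<le> 1" "3 * sqrt R * \<Gamma> * \<eta> = \<delta>" "1 / (3 * \<eta>) = \<Gamma> * sqrt R / \<delta>"
    using \<Gamma> \<delta> sR by (auto simp: \<eta>_eq field_simps)
  obtain C where C: "frob_net n1 n2 M \<delta> C"
    and card_C: "real (card C) \<le> (4 * real R * sqrt R / \<eta>) ^ R * real (card NU) ^ R * real (card NV) ^ R"
    using low_rank_net[OF \<Gamma> \<eta>(1,2) R NU(1) NV(1) U V M] \<eta>(3) by auto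
  have ge: "1 \<le> 4 * real R * sqrt R / \<eta>" "1 \<le> 8 * real n1 * sqrt k1 / \<eta>"
    "1 \<le> 8 * real n2 * sqrt k2 / \<eta>"
    using R n k \<eta> by (intro one_le_net_base; simp)+
  have le: "ln (4 * real R * sqrt R / \<eta>) \<le> 7 * ln N + ln (1 / (3 * \<eta>))"
    "ln (8 * real n1 * sqrt k1 / \<eta>) \<le> 7 * ln N + ln (1 / (3 * \<eta>))"
    "ln (8 * real n2 * sqrt k2 / \<eta>) \<le> 7 * ln N + ln (1 / (3 * \<eta>))"
    using R n k N by (intro ln_net_base_le[OF N(1) \<eta>(1)]; simp)+
  have "ln (real (card C)) \<le> real R * (1 + real k1 + real k2) * (7 * ln N + ln (1 / (3 * \<eta>)))"
    by (rule ln_le_of_power_bound[OF card_C _ NU(2) _ NV(2) ge le]) simp_all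
  then show ?thesis using C \<eta>(4) by auto
qed

text \<open>The constant 36 makes \<open>4 s \<le> k (1 / (3 x))\<^sup>2\<close> hold below the cap \<open>k = n\<close>.\<close>

lemma sparsity_level:
  assumes s: "1 \<le> s" and n: "1 \<le> n" and x: "1 \<le> x"
  defines "k \<equiv> min n (nat \<lceil>36 * real s * x\<^sup>2\<rceil>)"
  shows "1 \<le> k" "real k \<le> real n" "real k \<le> 37 * real s * x\<^sup>2"
    "n \<le> k \<or> 4 * real s \<le> real k * (1 / (3 * x))\<^sup>2"
proof -
  define y where "y = 36 * real s * x\<^sup>2"
  have "1 \<le> x\<^sup>2" using x by (simp add: one_le_power)
  then have sx: "1 * 1 \<le> real s * x\<^sup>2" using s by (intro mult_mono) auto
  have y: "y \<le> real (nat \<lceil>y\<rceil>)" "real (nat \<lceil>y\<rceil>) < y + 1" "36 \<le> y"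
    using sx ceiling_correct[of y] unfolding y_def by auto
  have k: "k = min n (nat \<lceil>y\<rceil>)" by (simp add: k_def y_def)
  have "(1::real) \<le> real (nat \<lceil>y\<rceil>)" using y(1,3) by linarith
  then show "1 \<le> k" using k n by simp
  show "real k \<le> real n" by (simp add: k)
  show "real k \<le> 37 * real s * x\<^sup>2" using k y sx unfolding y_def by auto
  have "4 * real s = y * (1 / (3 * x))\<^sup>2"
    using x by (simp add: y_def field_simps power2_eq_square)
  also have "\<dots> \<le> real (nat \<lceil>y\<rceil>) * (1 / (3 * x))\<^sup>2"
    using y by (intro mult_right_mono) auto
  finally show "n \<le> k \<or> 4 * real s \<le> real k * (1 / (3 * x))\<^sup>2" by (auto simp: k min_def)
qed

lemma S_log_size_le_linear:
  fixes N x :: real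
  assumes N: "2 \<le> N" and x: "1 \<le> x" and s: "1 \<le> s1" "1 \<le> s2"
  shows "real R * (1 + real s1 + real s2) * (7 * ln N + ln x) \<le> 18 * real R * real (s1 + s2) * ln N * x"
proof -
  have "ln 2 \<le> ln N" using N by simp
  then have L: "1 \<le> 2 * ln N" using ln2_ge_two_thirds by linarith
  then have "x \<le> 2 * ln N * x" using x by (simp add: mult_le_cancel_right1)
  moreover have "7 * ln N * 1 \<le> 7 * ln N * x" using L x by (intro mult_left_mono) auto
  moreover have "ln x \<le> x" using x by (simp add: ln_bound)
  ultimately have "7 * ln N + ln x \<le> 9 * ln N * x" by linarith
  moreover have "0 \<le> 7 * ln N + ln x" using L x by simp
  moreover have "real R * (1 + real s1 + real s2) \<le> real R * (2 * real (s1 + s2))"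
    using s by (intro mult_left_mono) auto
  ultimately have "real R * (1 + real s1 + real s2) * (7 * ln N + ln x)
      \<le> real R * (2 * real (s1 + s2)) * (9 * ln N * x)"
    using s by (intro mult_mono) auto
  then show ?thesis by (simp add: algebra_simps)
qed

lemma S_set_net:
  assumes n: "2 \<le> n1" "2 \<le> n2" and s: "1 \<le> s1" "s1 \<le> n1" "1 \<le> s2" "s2 \<le> n2"
    and R: "1 \<le> R" "R \<le> min n1 n2" and \<Gamma>: "0 < \<Gamma>" and \<delta>: "0 < \<delta>" "\<delta> \<le> \<Gamma> * sqrt R"
  shows "\<exists>C. frob_net n1 n2 (S_set n1 n2 s1 s2 R \<Gamma>) \<delta> C \<and>
    ln (real (card C)) \<le> 18 * real R * real (s1 + s2) * ln (real (max n1 n2)) * (\<Gamma> * sqrt R / \<delta>)"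
proof -
  define \<eta> where "\<eta> = \<delta> / (3 * \<Gamma> * sqrt R)"
  define N where "N = real (max n1 n2)"
  have sR: "1 \<le> sqrt R" using R by simp
  have \<eta>: "0 < \<eta>" "\<eta> \<le> 1" using \<Gamma> \<delta> sR by (auto simp: \<eta>_def field_simps)
  have N: "2 \<le> N" "real n1 \<le> N" "real n2 \<le> N" "real R \<le> N" using n R by (auto simp: N_def)
  have net: "\<exists>NU. unit_net n (sparse_ball n s) \<eta> NU \<and> real (card NU) \<le> (8 * real n * sqrt s / \<eta>) ^ s"
    if ns: "1 \<le> n" "1 \<le> s" for n s :: nat
  proof -
    obtain NU where "unit_net n (sparse_ball n s) \<eta> NU" "real (card NU) \<le> (4 * real n * sqrt s / \<eta>) ^ s"
      using sparse_ball_net[OF \<eta> ns] by blast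
    moreover have "(4 * real n * sqrt s / \<eta>) ^ s \<le> (8 * real n * sqrt s / \<eta>) ^ s"
      using \<eta>(1) by (intro power_mono divide_right_mono) auto
    ultimately show ?thesis by force
  qed
  obtain NU NV where NU: "unit_net n1 (sparse_ball n1 s1) \<eta> NU" "real (card NU) \<le> (8 * real n1 * sqrt s1 / \<eta>) ^ s1"
    and NV: "unit_net n2 (sparse_ball n2 s2) \<eta> NV" "real (card NV) \<le> (8 * real n2 * sqrt s2 / \<eta>) ^ s2"
    using net[of n1 s1] net[of n2 s2] n s by auto
  have M: "S_set n1 n2 s1 s2 R \<Gamma> \<subseteq> {rank_sum R \<sigma> u v | \<sigma> u v. vnorm2 R \<sigma> \<le> \<Gamma> \<and>
      (\<forall>r<R. u r \<in> sparse_ball n1 s1 \<and> v r \<in> sparse_ball n2 s2)}"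
    unfolding S_set_def sparse_ball_def by fastforce
  have "real s1 \<le> N" "real s2 \<le> N" using s N by linarith+
  then obtain C where C: "frob_net n1 n2 (S_set n1 n2 s1 s2 R \<Gamma>) \<delta> C"
    and ln_C: "ln (real (card C)) \<le> real R * (1 + real s1 + real s2) * (7 * ln N + ln (\<Gamma> * sqrt R / \<delta>))"
    using low_rank_net_ln_card[OF N _ _ R(1) \<Gamma> \<delta> _ _ _ _ NU NV _ _ M \<eta>_def] n s
    by (auto simp: sparse_ball_def)
  have "1 \<le> \<Gamma> * sqrt R / \<delta>" using \<delta> by simp
  from S_log_size_le_linear[OF N(1) this s(1,3), of R] ln_C C show ?thesis
    unfolding N_def by fastforce
qed

lemma KR_set_net:
  assumes n: "2 \<le> n1" "2 \<le> n2" and s: "1 \<le> s1" "1 \<le> s2"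
    and R: "1 \<le> R" "R \<le> min n1 n2" and \<Gamma>: "0 < \<Gamma>" and \<delta>: "0 < \<delta>" "\<delta> \<le> \<Gamma> * sqrt R"
  defines "x \<equiv> \<Gamma> * sqrt R / \<delta>" and "N \<equiv> real (max n1 n2)"
  shows "\<exists>C. frob_net n1 n2 (KR_set n1 n2 s1 s2 R \<Gamma>) \<delta> C \<and>
    ln (real (card C)) \<le> real R * (3 * min N (37 * real (s1 + s2) * x\<^sup>2) * (7 * ln N + ln x))"
proof -
  define \<eta> where "\<eta> = \<delta> / (3 * \<Gamma> * sqrt R)"
  define k1 where "k1 = min n1 (nat \<lceil>36 * real s1 * x\<^sup>2\<rceil>)"
  define k2 where "k2 = min n2 (nat \<lceil>36 * real s2 * x\<^sup>2\<rceil>)"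
  have sR: "1 \<le> sqrt R" using R by simp
  have \<eta>: "0 < \<eta>" "\<eta> \<le> 1" "\<eta> = 1 / (3 * x)" using \<Gamma> \<delta> sR by (auto simp: \<eta>_def x_def field_simps)
  have x: "1 \<le> x" using \<delta> by (simp add: x_def)
  have N: "2 \<le> N" "real n1 \<le> N" "real n2 \<le> N" "real R \<le> N" using n R by (auto simp: N_def)
  have n1: "1 \<le> n1" "1 \<le> n2" using n by simp_all
  note k1 = sparsity_level[OF s(1) n1(1) x, folded k1_def \<eta>(3)]
  note k2 = sparsity_level[OF s(2) n1(2) x, folded k2_def \<eta>(3)]
  obtain NU where NU: "unit_net n1 (K_set n1 s1) \<eta> NU" "real (card NU) \<le> (8 * real n1 * sqrt k1 / \<eta>) ^ k1"
    using K_set_net[OF \<eta>(1,2) n1(1) s(1) k1(1) k1(4)] by blast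
  obtain NV where NV: "unit_net n2 (K_set n2 s2) \<eta> NV" "real (card NV) \<le> (8 * real n2 * sqrt k2 / \<eta>) ^ k2"
    using K_set_net[OF \<eta>(1,2) n1(2) s(2) k2(1) k2(4)] by blast
  have M: "KR_set n1 n2 s1 s2 R \<Gamma> \<subseteq> {rank_sum R \<sigma> u v | \<sigma> u v. vnorm2 R \<sigma> \<le> \<Gamma> \<and>
      (\<forall>r<R. u r \<in> K_set n1 s1 \<and> v r \<in> K_set n2 s2)}"
    unfolding KR_set_def by fastforce
  have kN: "real k1 \<le> N" "real k2 \<le> N" using k1(2) k2(2) N by linarith+
  obtain C where C: "frob_net n1 n2 (KR_set n1 n2 s1 s2 R \<Gamma>) \<delta> C"
    and ln_C: "ln (real (card C)) \<le> real R * (1 + real k1 + real k2) * (7 * ln N + ln x)"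
    using low_rank_net_ln_card[OF N n1 R(1) \<Gamma> \<delta> k1(1) kN(1) k2(1) kN(2) NU NV _ _ M \<eta>_def]
    unfolding x_def by (auto simp: K_set_def)
  have "1 \<le> x\<^sup>2" using x by (simp add: one_le_power)
  then have "1 * 1 \<le> real (s1 + s2) * x\<^sup>2" using s by (intro mult_mono) auto
  then have B: "1 \<le> 37 * real (s1 + s2) * x\<^sup>2" by linarith
  have "real k1 + real k2 \<le> 37 * real (s1 + s2) * x\<^sup>2"
    using k1(3) k2(3) by (simp add: algebra_simps)
  then have "1 + real k1 + real k2 \<le> 3 * min N (37 * real (s1 + s2) * x\<^sup>2)"
    using B k1(2) k2(2) N by (cases "N \<le> 37 * real (s1 + s2) * x\<^sup>2") (simp_all add: min_def)
  moreover have "0 \<le> 7 * ln N + ln x" using N x by simp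
  ultimately have "real R * ((1 + real k1 + real k2) * (7 * ln N + ln x))
      \<le> real R * (3 * min N (37 * real (s1 + s2) * x\<^sup>2) * (7 * ln N + ln x))"
    by (intro mult_left_mono mult_right_mono) auto
  moreover have "ln (real (card C)) \<le> real R * ((1 + real k1 + real k2) * (7 * ln N + ln x))"
    using ln_C by (simp only: mult.assoc)
  ultimately show ?thesis using C by (meson order_trans)
qed

lemma powr_square_eq_exp:
  fixes x e :: real
  assumes "0 < x"
  shows "(x powr e)\<^sup>2 = exp (2 * e * ln x)"
  using assms by (simp add: powr_def power2_eq_square mult_exp_exp)

text \<open>
  Replacing \<open>x\<^sup>2\<close> by \<open>x\<^bsup>2 (1 - \<alpha>)\<^esup>\<close>, \<open>\<alpha> = 1 / (8 log N)\<close>, costs only a factor \<open>e\<^bsup>1/8\<^esup>\<close> as long as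
  \<open>x\<^sup>2 \<le> N\<close>; beyond that the bound \<open>3 N (7 log N + log x)\<close> is used instead.
\<close>

lemma K_log_size_le_powr_small:
  fixes L s x :: real
  assumes L: "2/3 \<le> L" and s: "1 \<le> s" and x: "1 \<le> x" and small: "2 * ln x \<le> L"
  shows "3 * (37 * s * x\<^sup>2) * (7 * L + ln x) \<le> 1024 * s * L * (x powr (1 - 1 / (8 * L)))\<^sup>2"
proof -
  define a where "a = ln x"
  define \<alpha> where "\<alpha> = 1 / (8 * L)"
  have L0: "0 < L" and \<alpha>L: "\<alpha> * L = 1/8" and \<alpha>0: "0 < \<alpha>"
    using L by (auto simp: \<alpha>_def)
  have x2: "x\<^sup>2 = exp (2 * a)" using powr_square_eq_exp[of x 1] x by (simp add: a_def)
  have "2 * \<alpha> * a \<le> \<alpha> * L" using small \<alpha>0 by (simp add: a_def mult.assoc mult_left_mono)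
  then have "7/8 \<le> exp (- (2 * \<alpha> * a))" using \<alpha>L exp_ge_add_one_self[of "- (2 * \<alpha> * a)"] by linarith
  have "7 * L + ln x \<le> 15/2 * L" using small by simp
  then have "3 * (37 * s * x\<^sup>2) * (7 * L + ln x) \<le> 3 * (37 * s * exp (2 * a)) * (15/2 * L)"
    unfolding x2 by (rule mult_left_mono) (use s in auto)
  also have "\<dots> \<le> (1024 * 7/8) * (s * L * exp (2 * a))" using s L0 by simp
  also have "\<dots> \<le> 1024 * (s * L * exp (2 * a)) * exp (- (2 * \<alpha> * a))"
    using \<open>7/8 \<le> exp (- (2 * \<alpha> * a))\<close> s L0 by (simp add: mult_left_mono)
  also have "\<dots> = 1024 * s * L * exp (2 * (1 - \<alpha>) * a)"
    by (simp add: exp_add[symmetric] algebra_simps)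
  finally show ?thesis using powr_square_eq_exp[of x "1 - \<alpha>"] x by (simp add: a_def \<alpha>_def)
qed

lemma K_log_size_le_powr_large:
  fixes N s x :: real
  assumes L: "2/3 \<le> ln N" and N: "0 < N" and s: "1 \<le> s" and x: "1 \<le> x" and large: "ln N < 2 * ln x"
  shows "3 * N * (7 * ln N + ln x) \<le> 1024 * s * ln N * (x powr (1 - 1 / (8 * ln N)))\<^sup>2"
proof -
  define L where "L = ln N"
  define \<alpha> where "\<alpha> = 1 / (8 * L)"
  define b where "b = 2 * ln x - L"
  have L0: "0 < L" and b0: "0 \<le> b" and \<alpha>L: "\<alpha> * L = 1/8" and \<alpha>: "\<alpha> \<le> 1/2"
    using L large by (auto simp: L_def b_def \<alpha>_def field_simps)
  have "3 * N * (7 * L + ln x) = N * (45/2 * L + 3/2 * b)" by (simp add: b_def algebra_simps)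
  also have "\<dots> \<le> N * (896 * L + 448 * L * b)"
  proof (intro mult_left_mono)
    have "3/2 * b \<le> 448 * L * b" using b0 L by (intro mult_right_mono) (auto simp: L_def)
    then show "45/2 * L + 3/2 * b \<le> 896 * L + 448 * L * b" using L0 by linarith
  qed (use N in simp)
  also have "\<dots> = (1024 * L * N) * ((7/8) * (1 + b/2))" by (simp add: algebra_simps)
  also have "\<dots> \<le> (1024 * L * N) * (exp (-(1/8)) * exp ((1 - \<alpha>) * b))"
  proof (intro mult_left_mono mult_mono)
    show "7/8 \<le> exp (-(1/8::real))" using exp_ge_add_one_self[of "-(1/8::real)"] by simp
    have "1/2 * b \<le> (1 - \<alpha>) * b" using \<alpha> b0 by (intro mult_right_mono) auto
    then show "1 + b/2 \<le> exp ((1 - \<alpha>) * b)" using exp_ge_add_one_self[of "(1 - \<alpha>) * b"] by linarith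
  qed (use L0 N b0 in auto)
  also have "\<dots> = 1024 * L * exp (2 * (1 - \<alpha>) * ln x)"
  proof -
    have "L + (-(1/8)) + (1 - \<alpha>) * b = 2 * (1 - \<alpha>) * ln x"
      using \<alpha>L by (simp add: b_def algebra_simps)
    then have "exp L * (exp (-(1/8)) * exp ((1 - \<alpha>) * b)) = exp (2 * (1 - \<alpha>) * ln x)"
      by (simp add: exp_add[symmetric] add.assoc)
    then show ?thesis using N by (simp add: L_def mult.assoc)
  qed
  also have "\<dots> \<le> 1024 * s * L * exp (2 * (1 - \<alpha>) * ln x)"
    using s L0 mult_right_mono[of 1 s "1024 * L * exp (2 * (1 - \<alpha>) * ln x)"] by (simp add: mult_ac)
  finally show ?thesis using powr_square_eq_exp[of x "1 - \<alpha>"] x by (simp add: L_def \<alpha>_def)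
qed

lemma K_log_size_le_powr:
  fixes N s x :: real
  assumes N: "2 \<le> N" and s: "1 \<le> s" and x: "1 \<le> x"
  shows "3 * min N (37 * s * x\<^sup>2) * (7 * ln N + ln x) \<le> 1024 * s * ln N * (x powr (1 - 1 / (8 * ln N)))\<^sup>2"
proof -
  have "ln 2 \<le> ln N" using N by simp
  then have L: "2/3 \<le> ln N" using ln2_ge_two_thirds by linarith
  have Q: "0 \<le> 7 * ln N + ln x" using L x by simp
  show ?thesis
  proof (cases "2 * ln x \<le> ln N")
    case True
    have "3 * min N (37 * s * x\<^sup>2) * (7 * ln N + ln x) \<le> 3 * (37 * s * x\<^sup>2) * (7 * ln N + ln x)"
      using Q by (intro mult_right_mono) auto
    with K_log_size_le_powr_small[OF L s x True] show ?thesis by linarith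
  next
    case False
    have "3 * min N (37 * s * x\<^sup>2) * (7 * ln N + ln x) \<le> 3 * N * (7 * ln N + ln x)"
      using Q by (intro mult_right_mono) auto
    with K_log_size_le_powr_large[OF L _ s x] False N show ?thesis by linarith
  qed
qed

section \<open>Entropy integrals\<close>

lemma antimono_on_borel_measurable_lebesgue_on:
  fixes f :: "real \<Rightarrow> real"
  assumes "\<And>a b. a \<in> A \<Longrightarrow> b \<in> A \<Longrightarrow> a \<le> b \<Longrightarrow> f b \<le> f a"
  shows "f \<in> borel_measurable (lebesgue_on A)"
proof -
  have "mono_on A (\<lambda>e. - f e)" by (rule mono_onI) (use assms in auto)
  then have "(\<lambda>e. - f e) \<in> borel_measurable (restrict_space borel A)"
    by (rule borel_measurable_mono_on_fnc)
  moreover have "space lborel = space lebesgue" "sets borel \<subseteq> sets lebesgue" by force+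
  ultimately have "(\<lambda>e. - f e) \<in> borel_measurable (lebesgue_on A)"
    by (metis borel_measurable_subalgebra mono_restrict_space space_lborel space_restrict_space)
  then show ?thesis using borel_measurable_uminus[of "\<lambda>e. - f e"] by simp
qed

lemma integral_le_of_powr_bound:
  fixes f :: "real \<Rightarrow> real"
  assumes D: "0 < D" and \<alpha>: "0 < \<alpha>" "\<alpha> \<le> 1" and c: "0 \<le> c"
    and nonneg: "\<And>e. 0 < e \<Longrightarrow> e < D \<Longrightarrow> 0 \<le> f e"
    and antimono: "\<And>a b. 0 < a \<Longrightarrow> a \<le> b \<Longrightarrow> b < D \<Longrightarrow> f b \<le> f a"
    and bound: "\<And>e. 0 < e \<Longrightarrow> e < D \<Longrightarrow> f e \<le> c * (D / e) powr (1 - \<alpha>)"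
  shows "f integrable_on {0..D} \<and> integral {0..D} f \<le> c * D / \<alpha>"
proof -
  define g where "g e = c * D powr (1 - \<alpha>) * e powr (\<alpha> - 1)" for e
  have "((\<lambda>e. e powr (\<alpha> - 1)) has_integral (D powr (\<alpha> - 1 + 1) / (\<alpha> - 1 + 1))) {0..D}"
    by (rule has_integral_powr_from_0) (use \<alpha> D in auto)
  then have "(g has_integral (c * D powr (1 - \<alpha>)) * (D powr \<alpha> / \<alpha>)) {0..D}"
    unfolding g_def by (intro has_integral_mult_right) simp
  moreover have "D powr (1 - \<alpha>) * D powr \<alpha> = D" using D by (simp add: powr_add[symmetric])
  then have "(c * D powr (1 - \<alpha>)) * (D powr \<alpha> / \<alpha>) = c * D / \<alpha>" by (simp add: field_simps)
  ultimately have "(g has_integral (c * D / \<alpha>)) {0..D}" by (simp only:)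
  then have g: "(g has_integral (c * D / \<alpha>)) {0<..<D}" using has_integral_Icc_iff_Ioo by blast
  have g_bound: "\<bar>f e\<bar> \<le> g e" if "e \<in> {0<..<D}" for e
  proof -
    have "e powr (\<alpha> - 1) = 1 / e powr (1 - \<alpha>)" using powr_minus_divide[of e "1 - \<alpha>"] by simp
    then have "(D / e) powr (1 - \<alpha>) = D powr (1 - \<alpha>) * e powr (\<alpha> - 1)"
      by (simp add: powr_divide)
    then show ?thesis using nonneg[of e] bound[of e] that by (simp add: g_def mult.assoc)
  qed
  have f: "f integrable_on {0<..<D}"
  proof (rule measurable_bounded_by_integrable_imp_integrable_real)
    show "f \<in> borel_measurable (lebesgue_on {0<..<D})"
      using antimono by (intro antimono_on_borel_measurable_lebesgue_on) auto
  qed (use g g_bound in auto)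
  have "integral {0<..<D} f \<le> integral {0<..<D} g"
    using g abs_le_D1[OF g_bound] by (intro integral_le[OF f]) auto
  also have "integral {0<..<D} g = c * D / \<alpha>" using g by (rule integral_unique)
  finally show ?thesis
    using f by (simp add: integrable_on_Icc_iff_Ioo integral_open_interval_real)
qed

lemma sqrt_ln_nat_mono:
  assumes "k \<le> l"
  shows "sqrt (ln (real k)) \<le> sqrt (ln (real l))"
proof (cases "k = 0")
  case True
  then show ?thesis by (cases "l = 0") auto
next
  case False
  then show ?thesis using assms by simp
qed

lemma sqrt_ln_nat_nonneg: "0 \<le> sqrt (ln (real k))"
  by (cases "k = 0") auto

lemma covering_entropy_integral_le:
  fixes \<Delta> m c \<alpha> :: real
  assumes \<Delta>: "0 < \<Delta>" and m: "0 < m" and \<alpha>: "0 < \<alpha>" "\<alpha> \<le> 1" and c: "0 \<le> c"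
    and nets: "\<And>\<delta>. 0 < \<delta> \<Longrightarrow> \<delta> \<le> \<Delta> \<Longrightarrow>
      \<exists>C. frob_net n1 n2 M \<delta> C \<and> sqrt (ln (real (card C))) \<le> c * (\<Delta> / \<delta>) powr (1 - \<alpha>)"
  shows "(\<lambda>\<epsilon>. sqrt (ln (real (covering_number n1 n2 M (sqrt m * \<epsilon>))))) integrable_on {0..\<Delta> / sqrt m}
    \<and> integral {0..\<Delta> / sqrt m} (\<lambda>\<epsilon>. sqrt (ln (real (covering_number n1 n2 M (sqrt m * \<epsilon>)))))
      \<le> c * (\<Delta> / sqrt m) / \<alpha>"
proof (rule integral_le_of_powr_bound[OF _ \<alpha> c])
  have sm: "0 < sqrt m" using m by simp
  then have scale: "0 < sqrt m * e" "sqrt m * e \<le> \<Delta>" if "0 < e" "e < \<Delta> / sqrt m" for e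
    using that by (simp_all add: pos_less_divide_eq mult.commute)
  show "0 < \<Delta> / sqrt m" using \<Delta> sm by simp
  show "0 \<le> sqrt (ln (real (covering_number n1 n2 M (sqrt m * e))))" for e
    by (rule sqrt_ln_nat_nonneg)
  show "sqrt (ln (real (covering_number n1 n2 M (sqrt m * b))))
      \<le> sqrt (ln (real (covering_number n1 n2 M (sqrt m * a))))"
    if "0 < a" "a \<le> b" "b < \<Delta> / sqrt m" for a b
  proof -
    have "0 < a" "a < \<Delta> / sqrt m" using that by linarith+
    then obtain C where "frob_net n1 n2 M (sqrt m * a) C" using nets[OF scale] by blast
    then have "covering_number n1 n2 M (sqrt m * b) \<le> covering_number n1 n2 M (sqrt m * a)"
      by (rule covering_number_antimono) (use that sm in simp)
    then show ?thesis by (rule sqrt_ln_nat_mono)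
  qed
  show "sqrt (ln (real (covering_number n1 n2 M (sqrt m * e)))) \<le> c * (\<Delta> / sqrt m / e) powr (1 - \<alpha>)"
    if e: "0 < e" "e < \<Delta> / sqrt m" for e
  proof -
    obtain C where C: "frob_net n1 n2 M (sqrt m * e) C"
      and card_C: "sqrt (ln (real (card C))) \<le> c * (\<Delta> / (sqrt m * e)) powr (1 - \<alpha>)"
      using nets[OF scale[OF e]] by blast
    have "sqrt (ln (real (covering_number n1 n2 M (sqrt m * e)))) \<le> sqrt (ln (real (card C)))"
      by (rule sqrt_ln_nat_mono[OF covering_number_le_card[OF C]])
    with card_C show ?thesis unfolding divide_divide_eq_left by linarith
  qed
qed

lemma entropy_bound_eq_sqrt:
  fixes c \<alpha> \<Gamma> P m :: real
  assumes "0 \<le> c" "0 < \<alpha>" "0 \<le> \<Gamma>" "0 \<le> P"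
  shows "c * sqrt P * (\<Gamma> * sqrt R / sqrt m) / \<alpha> = sqrt ((c / \<alpha>)\<^sup>2 * \<Gamma>\<^sup>2 * real R * P / m)"
  using assms by (simp add: real_sqrt_mult real_sqrt_divide mult_ac)

lemma S_set_entropy_integral:
  assumes n: "2 \<le> n1" "2 \<le> n2" and s: "1 \<le> s1" "s1 \<le> n1" "1 \<le> s2" "s2 \<le> n2"
    and R: "1 \<le> R" "R \<le> min n1 n2" and \<Gamma>: "1 \<le> \<Gamma>" and m: "1 \<le> m"
  defines "f \<equiv> \<lambda>\<epsilon>. sqrt (ln (real (covering_number n1 n2 (S_set n1 n2 s1 s2 R \<Gamma>) (sqrt m * \<epsilon>))))"
  shows "f integrable_on {0 .. \<Gamma> * sqrt R / sqrt m}"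
    "integral {0 .. \<Gamma> * sqrt R / sqrt m} f
      \<le> sqrt (72 * \<Gamma>\<^sup>2 * (real R)\<^sup>2 * real (s1 + s2) * ln (real (max n1 n2)) / real m)"
proof -
  define P where "P = real R * real (s1 + s2) * ln (real (max n1 n2))"
  have P: "0 \<le> P" using n by (simp add: P_def)
  have "\<exists>C. frob_net n1 n2 (S_set n1 n2 s1 s2 R \<Gamma>) \<delta> C
      \<and> sqrt (ln (real (card C))) \<le> sqrt 18 * sqrt P * (\<Gamma> * sqrt R / \<delta>) powr (1 - 1/2)"
    if \<delta>: "0 < \<delta>" "\<delta> \<le> \<Gamma> * sqrt R" for \<delta>
  proof -
    have "0 < \<Gamma>" using \<Gamma> by simp
    with n s R obtain C where C: "frob_net n1 n2 (S_set n1 n2 s1 s2 R \<Gamma>) \<delta> C"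
      and "ln (real (card C)) \<le> 18 * P * (\<Gamma> * sqrt R / \<delta>)"
      using S_set_net[of n1 n2 s1 s2 R \<Gamma> \<delta>] \<delta> by (auto simp: P_def mult.assoc)
    then have "sqrt (ln (real (card C))) \<le> sqrt 18 * sqrt P * sqrt (\<Gamma> * sqrt R / \<delta>)"
      by (simp add: real_sqrt_mult[symmetric])
    then show ?thesis using C \<Gamma> \<delta> by (auto simp: powr_half_sqrt)
  qed
  from covering_entropy_integral_le[OF _ _ _ _ _ this, of "real m"]
  have "f integrable_on {0 .. \<Gamma> * sqrt R / sqrt m} \<and>
      integral {0 .. \<Gamma> * sqrt R / sqrt m} f \<le> sqrt 18 * sqrt P * (\<Gamma> * sqrt R / sqrt m) / (1/2)"
    using \<Gamma> R m P by (simp add: f_def)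
  moreover have "sqrt 18 * sqrt P * (\<Gamma> * sqrt R / sqrt m) / (1/2)
      = sqrt ((sqrt 18 / (1/2))\<^sup>2 * \<Gamma>\<^sup>2 * real R * P / real m)"
    by (rule entropy_bound_eq_sqrt) (use \<Gamma> P in auto)
  moreover have "(sqrt 18 / (1/2))\<^sup>2 = (72::real)" by (simp add: power_divide)
  ultimately show "f integrable_on {0 .. \<Gamma> * sqrt R / sqrt m}"
    "integral {0 .. \<Gamma> * sqrt R / sqrt m} f
      \<le> sqrt (72 * \<Gamma>\<^sup>2 * (real R)\<^sup>2 * real (s1 + s2) * ln (real (max n1 n2)) / real m)"
    by (simp_all add: P_def power2_eq_square algebra_simps)
qed

lemma KR_set_net_powr:
  assumes n: "2 \<le> n1" "2 \<le> n2" and s: "1 \<le> s1" "1 \<le> s2"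
    and R: "1 \<le> R" "R \<le> min n1 n2" and \<Gamma>: "0 < \<Gamma>" and \<delta>: "0 < \<delta>" "\<delta> \<le> \<Gamma> * sqrt R"
  defines "L \<equiv> ln (real (max n1 n2))"
  shows "\<exists>C. frob_net n1 n2 (KR_set n1 n2 s1 s2 R \<Gamma>) \<delta> C \<and> sqrt (ln (real (card C)))
    \<le> 32 * sqrt (real R * real (s1 + s2) * L) * (\<Gamma> * sqrt R / \<delta>) powr (1 - 1 / (8 * L))"
proof -
  define x where "x = \<Gamma> * sqrt R / \<delta>"
  define y where "y = x powr (1 - 1 / (8 * L))"
  define P where "P = real R * real (s1 + s2) * L"
  have x: "1 \<le> x" using \<delta> by (simp add: x_def)
  have N: "2 \<le> real (max n1 n2)" using n by simp
  obtain C where C: "frob_net n1 n2 (KR_set n1 n2 s1 s2 R \<Gamma>) \<delta> C"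
    and ln_C: "ln (real (card C))
      \<le> real R * (3 * min (real (max n1 n2)) (37 * real (s1 + s2) * x\<^sup>2) * (7 * L + ln x))"
    using KR_set_net[OF n s R \<Gamma> \<delta>] unfolding L_def x_def by blast
  have "3 * min (real (max n1 n2)) (37 * real (s1 + s2) * x\<^sup>2) * (7 * L + ln x)
      \<le> 1024 * real (s1 + s2) * L * y\<^sup>2"
    using K_log_size_le_powr[OF N _ x, of "real (s1 + s2)"] s unfolding L_def y_def by simp
  then have "ln (real (card C)) \<le> real R * (1024 * real (s1 + s2) * L * y\<^sup>2)"
    using ln_C mult_left_mono[of _ _ "real R"] by (meson of_nat_0_le_iff order_trans)
  also have "\<dots> = (32 * y)\<^sup>2 * P" by (simp add: P_def power2_eq_square algebra_simps)
  finally have "sqrt (ln (real (card C))) \<le> sqrt ((32 * y)\<^sup>2 * P)" by simp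
  also have "\<dots> = 32 * sqrt P * y" by (simp add: real_sqrt_mult y_def)
  finally show ?thesis using C by (auto simp: x_def y_def P_def)
qed

lemma KR_set_entropy_integral:
  assumes n: "2 \<le> n1" "2 \<le> n2" and s: "1 \<le> s1" "1 \<le> s2"
    and R: "1 \<le> R" "R \<le> min n1 n2" and \<Gamma>: "1 \<le> \<Gamma>" and m: "1 \<le> m"
  defines "f \<equiv> \<lambda>\<epsilon>. sqrt (ln (real (covering_number n1 n2 (KR_set n1 n2 s1 s2 R \<Gamma>) (sqrt m * \<epsilon>))))"
  shows "f integrable_on {0 .. \<Gamma> * sqrt R / sqrt m}"
    "integral {0 .. \<Gamma> * sqrt R / sqrt m} f
      \<le> sqrt (65536 * \<Gamma>\<^sup>2 * (real R)\<^sup>2 * real (s1 + s2) * (ln (real (max n1 n2)))^3 / real m)"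
proof -
  define L where "L = ln (real (max n1 n2))"
  define P where "P = real R * real (s1 + s2) * L"
  have "ln 2 \<le> L" using n by (simp add: L_def)
  then have L: "2/3 \<le> L" using ln2_ge_two_thirds by linarith
  then have \<alpha>: "0 < 1 / (8 * L)" "1 / (8 * L) \<le> 1" by (simp_all add: field_simps)
  have P: "0 \<le> P" using L by (simp add: P_def)
  have "0 < \<Gamma>" using \<Gamma> by simp
  from covering_entropy_integral_le[OF _ _ \<alpha> _ KR_set_net_powr[OF n s R this, folded L_def], of "real m"]
  have "f integrable_on {0 .. \<Gamma> * sqrt R / sqrt m} \<and>
      integral {0 .. \<Gamma> * sqrt R / sqrt m} f \<le> 32 * sqrt P * (\<Gamma> * sqrt R / sqrt m) / (1 / (8 * L))"
    using \<Gamma> R m P by (simp add: f_def L_def P_def)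
  moreover have "32 * sqrt P * (\<Gamma> * sqrt R / sqrt m) / (1 / (8 * L))
      = sqrt ((32 / (1 / (8 * L)))\<^sup>2 * \<Gamma>\<^sup>2 * real R * P / real m)"
    by (rule entropy_bound_eq_sqrt) (use \<Gamma> P \<alpha> in auto)
  moreover have "(32 / (1 / (8 * L)))\<^sup>2 = 65536 * L\<^sup>2" by (simp add: power2_eq_square)
  ultimately show "f integrable_on {0 .. \<Gamma> * sqrt R / sqrt m}"
    "integral {0 .. \<Gamma> * sqrt R / sqrt m} f
      \<le> sqrt (65536 * \<Gamma>\<^sup>2 * (real R)\<^sup>2 * real (s1 + s2) * (ln (real (max n1 n2)))^3 / real m)"
    by (simp_all add: P_def L_def power2_eq_square power3_eq_cube algebra_simps)
qed

theorem mainTheorem11: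
  "\<exists>CS>0. \<exists>CK>0. \<forall>(n1::nat) (n2::nat) (s1::nat) (s2::nat) (R::nat) (\<Gamma>::real) (m::nat).
     2 \<le> n1 \<and> 2 \<le> n2 \<and> 1 \<le> s1 \<and> s1 \<le> n1 \<and> 1 \<le> s2 \<and> s2 \<le> n2 \<and>
     1 \<le> R \<and> R \<le> min n1 n2 \<and> 1 \<le> \<Gamma> \<and> 1 \<le> m \<longrightarrow>
     ((\<lambda>\<epsilon>. sqrt (ln (real (covering_number n1 n2 (S_set n1 n2 s1 s2 R \<Gamma>) (sqrt m * \<epsilon>)))))
         integrable_on {0 .. \<Gamma> * sqrt R / sqrt m}) \<and>
     integral {0 .. \<Gamma> * sqrt R / sqrt m}
       (\<lambda>\<epsilon>. sqrt (ln (real (covering_number n1 n2 (S_set n1 n2 s1 s2 R \<Gamma>) (sqrt m * \<epsilon>)))))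
       \<le> sqrt (CS * \<Gamma>\<^sup>2 * (real R)\<^sup>2 * real (s1 + s2) * ln (real (max n1 n2)) / real m) \<and>
     ((\<lambda>\<epsilon>. sqrt (ln (real (covering_number n1 n2 (KR_set n1 n2 s1 s2 R \<Gamma>) (sqrt m * \<epsilon>)))))
         integrable_on {0 .. \<Gamma> * sqrt R / sqrt m}) \<and>
     integral {0 .. \<Gamma> * sqrt R / sqrt m}
       (\<lambda>\<epsilon>. sqrt (ln (real (covering_number n1 n2 (KR_set n1 n2 s1 s2 R \<Gamma>) (sqrt m * \<epsilon>)))))
       \<le> sqrt (CK * \<Gamma>\<^sup>2 * (real R)\<^sup>2 * real (s1 + s2) * (ln (real (max n1 n2)))^3 / real m)"
proof (rule exI[of _ 72], rule conjI, simp, rule exI[of _ 65536], rule conjI, simp,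
    intro allI impI, elim conjE, intro conjI)
qed (assumption | rule S_set_entropy_integral KR_set_entropy_integral)+

end
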